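(* Let $(\mathcal A,\varphi,\mathcal F,\Phi)$ be a ncps of type B$'$ with associated infinitesimal ncps $(\mathcal B,\varphi,\varphi')$. Let $(\mathcal A_i)_{i\in I}$ be subalgebras of $\mathcal A$ containing $1_{\mathcal A}$ and $(\mathcal F_j)_{j\in J}$ subalgebras of $\mathcal F$; set $\mathcal A_i':=\mathcal A_i\oplus\{0_{\mathcal F}\}\subseteq\mathcal B$ and $\mathcal F_j':=\mathbb C1_{\mathcal A}\oplus\mathcal F_j\subseteq\mathcal B$. Then: (A) $((\mathcal A_i)_{i\in I},(\mathcal F_j)_{j\in J})$ is B$'$-free in $(\mathcal A,\varphi,\mathcal F,\Phi)$ if and only if the subalgebras $\mathcal A_i'$ ($i\in I$), $\mathcal F_j'$ ($j\in J$) are infinitesimally free in $(\mathcal B,\varphi,\varphi')$. (B) Let $\mathcal F':=\mathbb C1_{\mathcal A}\oplus\langle\mathcal F_j: j\in J\rangle$ (where $\langle\mathcal F_j:j\in J\rangle$ is the subalgebra of $\mathcal F$ generated by all $\mathcal F_j$). Then $((\mathcal A_i)_{i\in I},(\mathcal F_j)_{j\in J})$ is weakly B$'$-free in $(\mathcal A,\varphi,\mathcal F,\Phi)$ if and only if the subalgebras $\mathcal A_i'$ ($i\in I$) and $\mathcal F'$ are infinitesimally free in $(\mathcal B,\varphi,\varphi')$.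
   Context: Ncps of type B$'$ $(\mathcal A,\varphi,\mathcal F,\Phi)$: $\mathcal A$ unital complex algebra, $\varphi:\mathcal A\to\mathbb C$ linear with $\varphi(1_{\mathcal A})=1$, $\mathcal F$ an algebra which is an $\mathcal A$-bimodule compatible with its multiplication, $\Phi:\mathcal F\to\mathbb C$ linear. $\mathcal B=\mathcal A\oplus\mathcal F$ with product $(a_1,f_1)(a_2,f_2)=(a_1a_2,a_1f_2+f_1a_2+f_1f_2)$ and unit $1_{\mathcal A}$; $\varphi(a+f):=\varphi(a)$, $\varphi'(a+f):=\Phi(f)$. Freeness of unital subalgebras $(\mathcal A_i)$ w.r.t. $\varphi$: $\varphi(c_1\cdots c_n)=0$ whenever $i_1\ne i_2\ne\cdots\ne i_n$, $c_l\in\mathcal A_{i_l}$, $\varphi(c_l)=0$. Cyclic-antimonotone independence of $(\mathcal A_0,\mathcal F_0)$: $\Phi(c_0g_1c_1\cdots c_{n-1}g_nc_n)=\varphi(c_0c_n)\prod_{l=1}^{n-1}\varphi(c_l)\,\Phi(g_1\cdots g_n)$ for all $n\ge1$, $c_l\in\mathcal A_0$, $g_l\in\mathcal F_0$. Trivial independence of $(\mathcal F_j)$: $\Phi(g_1\cdots g_n)=0$ whenever $n\ge2$, $j_1\ne\cdots\ne j_n$, $g_l\in\mathcal F_{j_l}$. $((\mathcal A_i),(\mathcal F_j))$ is weakly B$'$-free if $(\mathcal A_i)$ are free w.r.t. $\varphi$ and (algebra generated by all $\mathcal A_i$, algebra generated by all $\mathcal F_j$) is cyclic-antimonotone independent;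 it is B$'$-free if in addition $(\mathcal F_j)$ are trivially independent. Infinitesimal freeness of unital subalgebras $(\mathcal B_k)$ of $(\mathcal B,\varphi,\varphi')$: for $k_1\ne k_2\ne\cdots\ne k_n$ and $b_l\in\mathcal B_{k_l}$ with $\varphi(b_l)=0$, $\varphi(b_1\cdots b_n)=0$ and $\varphi'(b_1\cdots b_n)=\varphi(b_1b_n)\varphi(b_2b_{n-1})\cdots\varphi(b_{(n-1)/2}b_{(n+3)/2})\varphi'(b_{(n+1)/2})$ if $n$ is odd and $k_1=k_n,k_2=k_{n-1},\dots,k_{(n-1)/2}=k_{(n+3)/2}$, and $0$ otherwise. *)

theory Defs
  imports Main Complex_Main
begin

text \<open>The algebra A is a type 'a of class ring_1 together with a complex scalar
multiplication sa; the (possibly non-unital) algebra F is a type 'f of class ring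
with complex scalar multiplication sf; la / ra are the left / right A-actions on F.\<close>

definition complex_alg :: "(complex \<Rightarrow> 'r::ring \<Rightarrow> 'r) \<Rightarrow> bool" where
  "complex_alg s \<longleftrightarrow>
     (\<forall>c x y. s c (x + y) = s c x + s c y) \<and>
     (\<forall>c d x. s (c + d) x = s c x + s d x) \<and>
     (\<forall>c d x. s c (s d x) = s (c * d) x) \<and>
     (\<forall>x. s 1 x = x) \<and>
     (\<forall>c x y. s c (x * y) = s c x * y) \<and>
     (\<forall>c x y. s c (x * y) = x * s c y)"

definition lin_functional :: "(complex \<Rightarrow> 'r::ring \<Rightarrow> 'r) \<Rightarrow> ('r \<Rightarrow> complex) \<Rightarrow> bool" where
  "lin_functional s f \<longleftrightarrow> (\<forall>x y. f (x + y) = f x + f y) \<and> (\<forall>c x. f (s c x) = c * f x)"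

definition bimodule_compat ::
  "(complex \<Rightarrow> 'a::ring_1 \<Rightarrow> 'a) \<Rightarrow> (complex \<Rightarrow> 'f::ring \<Rightarrow> 'f) \<Rightarrow>
   ('a \<Rightarrow> 'f \<Rightarrow> 'f) \<Rightarrow> ('f \<Rightarrow> 'a \<Rightarrow> 'f) \<Rightarrow> bool" where
  "bimodule_compat sa sf la ra \<longleftrightarrow>
     (\<forall>f. la 1 f = f) \<and> (\<forall>f. ra f 1 = f) \<and>
     (\<forall>a b f. la (a * b) f = la a (la b f)) \<and>
     (\<forall>a b f. ra f (a * b) = ra (ra f a) b) \<and>
     (\<forall>a b f. la (a + b) f = la a f + la b f) \<and>
     (\<forall>a f g. la a (f + g) = la a f + la a g) \<and>
     (\<forall>a b f. ra f (a + b) = ra f a + ra f b) \<and>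
     (\<forall>a f g. ra (f + g) a = ra f a + ra g a) \<and>
     (\<forall>c a f. la (sa c a) f = sf c (la a f)) \<and>
     (\<forall>c a f. la a (sf c f) = sf c (la a f)) \<and>
     (\<forall>c a f. ra f (sa c a) = sf c (ra f a)) \<and>
     (\<forall>c a f. ra (sf c f) a = sf c (ra f a)) \<and>
     (\<forall>a b f. ra (la a f) b = la a (ra f b)) \<and>
     (\<forall>a f g. la a (f * g) = la a f * g) \<and>
     (\<forall>a f g. ra (f * g) a = f * ra g a) \<and>
     (\<forall>a f g. ra f a * g = f * la a g)"

definition ncps_B' ::
  "(complex \<Rightarrow> 'a::ring_1 \<Rightarrow> 'a) \<Rightarrow> ('a \<Rightarrow> complex) \<Rightarrow>
   (complex \<Rightarrow> 'f::ring \<Rightarrow> 'f) \<Rightarrow> ('a \<Rightarrow> 'f \<Rightarrow> 'f) \<Rightarrow> ('f \<Rightarrow> 'a \<Rightarrow> 'f) \<Rightarrow>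
   ('f \<Rightarrow> complex) \<Rightarrow> bool" where
  "ncps_B' sa phi sf la ra Phi \<longleftrightarrow>
     complex_alg sa \<and> complex_alg sf \<and> bimodule_compat sa sf la ra \<and>
     lin_functional sa phi \<and> phi 1 = 1 \<and> lin_functional sf Phi"

definition unital_subalg :: "(complex \<Rightarrow> 'a::ring_1 \<Rightarrow> 'a) \<Rightarrow> 'a set \<Rightarrow> bool" where
  "unital_subalg s S \<longleftrightarrow> 1 \<in> S \<and> (\<forall>x\<in>S. \<forall>y\<in>S. x + y \<in> S \<and> x * y \<in> S) \<and>
     (\<forall>c. \<forall>x\<in>S. s c x \<in> S)"

definition subalg :: "(complex \<Rightarrow> 'f::ring \<Rightarrow> 'f) \<Rightarrow> 'f set \<Rightarrow> bool" where
  "subalg s S \<longleftrightarrow> 0 \<in> S \<and> (\<forall>x\<in>S. \<forall>y\<in>S. x + y \<in> S \<and> x * y \<in> S) \<and>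
     (\<forall>c. \<forall>x\<in>S. s c x \<in> S)"

inductive_set gen_unital_alg :: "(complex \<Rightarrow> 'a::ring_1 \<Rightarrow> 'a) \<Rightarrow> 'a set \<Rightarrow> 'a set"
  for s :: "complex \<Rightarrow> 'a \<Rightarrow> 'a" and S :: "'a set" where
  gua_base: "x \<in> S \<Longrightarrow> x \<in> gen_unital_alg s S"
| gua_one: "1 \<in> gen_unital_alg s S"
| gua_add: "x \<in> gen_unital_alg s S \<Longrightarrow> y \<in> gen_unital_alg s S \<Longrightarrow> x + y \<in> gen_unital_alg s S"
| gua_mult: "x \<in> gen_unital_alg s S \<Longrightarrow> y \<in> gen_unital_alg s S \<Longrightarrow> x * y \<in> gen_unital_alg s S"
| gua_scale: "x \<in> gen_unital_alg s S \<Longrightarrow> s c x \<in> gen_unital_alg s S"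

inductive_set gen_alg :: "(complex \<Rightarrow> 'f::ring \<Rightarrow> 'f) \<Rightarrow> 'f set \<Rightarrow> 'f set"
  for s :: "complex \<Rightarrow> 'f \<Rightarrow> 'f" and S :: "'f set" where
  ga_base: "x \<in> S \<Longrightarrow> x \<in> gen_alg s S"
| ga_zero: "0 \<in> gen_alg s S"
| ga_add: "x \<in> gen_alg s S \<Longrightarrow> y \<in> gen_alg s S \<Longrightarrow> x + y \<in> gen_alg s S"
| ga_mult: "x \<in> gen_alg s S \<Longrightarrow> y \<in> gen_alg s S \<Longrightarrow> x * y \<in> gen_alg s S"
| ga_scale: "x \<in> gen_alg s S \<Longrightarrow> s c x \<in> gen_alg s S"

text \<open>Elements a + f of B are represented as pairs (a, f).\<close>
definition bmult :: "('a::ring_1 \<Rightarrow> 'f::ring \<Rightarrow> 'f) \<Rightarrow> ('f \<Rightarrow> 'a \<Rightarrow> 'f) \<Rightarrow>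
    'a \<times> 'f \<Rightarrow> 'a \<times> 'f \<Rightarrow> 'a \<times> 'f" where
  "bmult la ra x y = (fst x * fst y, la (fst x) (snd y) + ra (snd x) (fst y) + snd x * snd y)"

definition bprod :: "('a::ring_1 \<Rightarrow> 'f::ring \<Rightarrow> 'f) \<Rightarrow> ('f \<Rightarrow> 'a \<Rightarrow> 'f) \<Rightarrow>
    ('a \<times> 'f) list \<Rightarrow> 'a \<times> 'f" where
  "bprod la ra xs = foldr (bmult la ra) xs (1, 0)"

definition phiB :: "('a \<Rightarrow> complex) \<Rightarrow> 'a \<times> 'f \<Rightarrow> complex" where
  "phiB phi x = phi (fst x)"

definition phiB' :: "('f \<Rightarrow> complex) \<Rightarrow> 'a \<times> 'f \<Rightarrow> complex" where
  "phiB' Phi x = Phi (snd x)"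

text \<open>A_i' = A_i \<oplus> {0}, and C 1_A \<oplus> G for a subset G of F.\<close>
definition embA :: "'a set \<Rightarrow> ('a \<times> 'f::zero) set" where
  "embA S = (\<lambda>a. (a, 0)) ` S"

definition embF :: "(complex \<Rightarrow> 'a::ring_1 \<Rightarrow> 'a) \<Rightarrow> 'f set \<Rightarrow> ('a \<times> 'f) set" where
  "embF sa G = {(sa c 1, f) | c f. f \<in> G}"

definition alternating :: "'k list \<Rightarrow> bool" where
  "alternating ks \<longleftrightarrow> (\<forall>l. Suc l < length ks \<longrightarrow> ks ! l \<noteq> ks ! Suc l)"

fun fprod :: "'f::ring list \<Rightarrow> 'f" where
  "fprod [] = 0"
| "fprod [g] = g"
| "fprod (g # gs) = g * fprod gs"

definition free_family :: "('a::ring_1 \<Rightarrow> complex) \<Rightarrow> 'i set \<Rightarrow> ('i \<Rightarrow> 'a set) \<Rightarrow> bool" where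
  "free_family phi I A \<longleftrightarrow>
     (\<forall>ks cs. ks \<noteq> [] \<and> length cs = length ks \<and> set ks \<subseteq> I \<and> alternating ks \<and>
        (\<forall>l < length ks. cs ! l \<in> A (ks ! l) \<and> phi (cs ! l) = 0)
        \<longrightarrow> phi (prod_list cs) = 0)"

text \<open>The element c_0 g_1 c_1 \<cdots> c_{n-1} g_n c_n of B, as a list of factors.\<close>
fun interleave :: "'a::zero list \<Rightarrow> 'f list \<Rightarrow> ('a \<times> 'f::zero) list" where
  "interleave (c # cs) (g # gs) = (c, 0) # (0, g) # interleave cs gs"
| "interleave [c] [] = [(c, 0)]"
| "interleave _ _ = []"

text \<open>Cyclic-antimonotone independence of (A0, F0).  Lists cs = [c_0,...,c_n], gs = [g_1,...,g_n].
  The mixed product c_0 g_1 c_1 \<cdots> g_n c_n (an element of F) is computed in B.\<close>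
definition cyc_antimonotone ::
  "('a::ring_1 \<Rightarrow> complex) \<Rightarrow> ('a \<Rightarrow> 'f::ring \<Rightarrow> 'f) \<Rightarrow> ('f \<Rightarrow> 'a \<Rightarrow> 'f) \<Rightarrow> ('f \<Rightarrow> complex) \<Rightarrow>
   'a set \<Rightarrow> 'f set \<Rightarrow> bool" where
  "cyc_antimonotone phi la ra Phi A0 F0 \<longleftrightarrow>
     (\<forall>n cs gs. n \<ge> 1 \<and> length cs = n + 1 \<and> length gs = n \<and> set cs \<subseteq> A0 \<and> set gs \<subseteq> F0
        \<longrightarrow> Phi (snd (bprod la ra (interleave cs gs))) =
            phi (cs ! 0 * cs ! n) * (\<Prod>l\<in>{1..n-1}. phi (cs ! l)) * Phi (fprod gs))"

definition trivially_independent :: "('f::ring \<Rightarrow> complex) \<Rightarrow> 'j set \<Rightarrow> ('j \<Rightarrow> 'f set) \<Rightarrow> bool" where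
  "trivially_independent Phi J F \<longleftrightarrow>
     (\<forall>js gs. length js \<ge> 2 \<and> length gs = length js \<and> set js \<subseteq> J \<and> alternating js \<and>
        (\<forall>l < length js. gs ! l \<in> F (js ! l))
        \<longrightarrow> Phi (fprod gs) = 0)"

definition weakly_B'_free ::
  "(complex \<Rightarrow> 'a::ring_1 \<Rightarrow> 'a) \<Rightarrow> ('a \<Rightarrow> complex) \<Rightarrow> (complex \<Rightarrow> 'f::ring \<Rightarrow> 'f) \<Rightarrow>
   ('a \<Rightarrow> 'f \<Rightarrow> 'f) \<Rightarrow> ('f \<Rightarrow> 'a \<Rightarrow> 'f) \<Rightarrow> ('f \<Rightarrow> complex) \<Rightarrow>
   'i set \<Rightarrow> ('i \<Rightarrow> 'a set) \<Rightarrow> 'j set \<Rightarrow> ('j \<Rightarrow> 'f set) \<Rightarrow> bool" where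
  "weakly_B'_free sa phi sf la ra Phi I A J F \<longleftrightarrow>
     free_family phi I A \<and>
     cyc_antimonotone phi la ra Phi (gen_unital_alg sa (\<Union>i\<in>I. A i)) (gen_alg sf (\<Union>j\<in>J. F j))"

definition B'_free ::
  "(complex \<Rightarrow> 'a::ring_1 \<Rightarrow> 'a) \<Rightarrow> ('a \<Rightarrow> complex) \<Rightarrow> (complex \<Rightarrow> 'f::ring \<Rightarrow> 'f) \<Rightarrow>
   ('a \<Rightarrow> 'f \<Rightarrow> 'f) \<Rightarrow> ('f \<Rightarrow> 'a \<Rightarrow> 'f) \<Rightarrow> ('f \<Rightarrow> complex) \<Rightarrow>
   'i set \<Rightarrow> ('i \<Rightarrow> 'a set) \<Rightarrow> 'j set \<Rightarrow> ('j \<Rightarrow> 'f set) \<Rightarrow> bool" where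
  "B'_free sa phi sf la ra Phi I A J F \<longleftrightarrow>
     weakly_B'_free sa phi sf la ra Phi I A J F \<and> trivially_independent Phi J F"

text \<open>Infinitesimal freeness of (B_k)_{k \<in> K} in (B, phiB, phiB').  0-based indices:
  paper's b_l is bs!(l-1).\<close>
definition inf_free ::
  "('a::ring_1 \<Rightarrow> 'f::ring \<Rightarrow> 'f) \<Rightarrow> ('f \<Rightarrow> 'a \<Rightarrow> 'f) \<Rightarrow> ('a \<Rightarrow> complex) \<Rightarrow> ('f \<Rightarrow> complex) \<Rightarrow>
   'k set \<Rightarrow> ('k \<Rightarrow> ('a \<times> 'f) set) \<Rightarrow> bool" where
  "inf_free la ra phi Phi K B \<longleftrightarrow>
     (\<forall>ks bs. ks \<noteq> [] \<and> length bs = length ks \<and> set ks \<subseteq> K \<and> alternating ks \<and>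
        (\<forall>l < length ks. bs ! l \<in> B (ks ! l) \<and> phiB phi (bs ! l) = 0)
        \<longrightarrow> (let n = length ks in
              phiB phi (bprod la ra bs) = 0 \<and>
              phiB' Phi (bprod la ra bs) =
                (if odd n \<and> (\<forall>l < n div 2. ks ! l = ks ! (n - 1 - l))
                 then (\<Prod>l<n div 2. phiB phi (bmult la ra (bs ! l) (bs ! (n - 1 - l))))
                      * phiB' Phi (bs ! (n div 2))
                 else 0)))"

end

theory Submission
  imports Defs "HOL-Library.Product_Plus"
begin

(* Infinitesimal freeness is a statement about phi and phi' on centered words, i.e. alternating
   products of centered elements of the given subalgebras; merging adjacent letters with equal
   labels and recentering shows that these products span the generated algebra.  For phi it
   amounts to freeness of the A-labels, since letters from F-labels have vanishing A-part.  For
   phi', grouping a word into maximal A-blocks c_l and F-blocks g_l gives c_0 g_1 c_1 ... g_n c_n,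
   which cyclic-antimonotone independence evaluates; the interior blocks are centered A-words, so
   only words with a single F-block survive, with value phi(c_0 c_n) Phi(g): the palindromic
   formula if the block is one letter, and zero by trivial independence otherwise.  Conversely,
   infinitesimal freeness gives phi'(x y z) = phi(x z) phi'(y) for x, z from the A-part and
   centered y from the F-part, and phi'(x y_1 z y_2 t) = 0 for centered z; splitting c_1 into its
   mean and its centered part then reduces c_0 g_1 c_1 ... g_n c_n to a shorter product.  For weak
   B'-freeness the F_j are merged into one F-label, for which trivial independence is vacuous. *)

lemma alternating_Nil [simp]: "alternating []"
  and alternating_single [simp]: "alternating [x]"
  by (simp_all add: alternating_def)

lemma alternating_Cons:
  "alternating (x # xs) \<longleftrightarrow> (xs \<noteq> [] \<longrightarrow> x \<noteq> hd xs) \<and> alternating xs"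
  by (cases xs) (auto simp: alternating_def nth_Cons split: nat.splits)

lemma alternating_append:
  "alternating (xs @ ys) \<longleftrightarrow>
     alternating xs \<and> alternating ys \<and> (xs \<noteq> [] \<and> ys \<noteq> [] \<longrightarrow> last xs \<noteq> hd ys)"
  by (induction xs) (auto simp: alternating_Cons)

lemma alternating_map:
  "inj_on f (set xs) \<Longrightarrow> alternating (map f xs) \<longleftrightarrow> alternating xs"
  by (induction xs) (auto simp: alternating_Cons hd_map dest: inj_onD)

lemma split_into_blocks:
  obtains "\<forall>x\<in>set xs. P x"
  | u R v where "xs = u @ R @ v" "\<forall>x\<in>set u. P x" "R \<noteq> []" "\<forall>x\<in>set R. \<not> P x" "\<forall>x\<in>set v. P x"
  | u R v y r where "xs = u @ R @ v @ y # r" "\<forall>x\<in>set u. P x" "R \<noteq> []" "\<forall>x\<in>set R. \<not> P x"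
      "v \<noteq> []" "\<forall>x\<in>set v. P x" "\<not> P y"
proof -
  define u r0 where "u = takeWhile P xs" and "r0 = dropWhile P xs"
  define R r1 where "R = takeWhile (Not \<circ> P) r0" and "r1 = dropWhile (Not \<circ> P) r0"
  define v r2 where "v = takeWhile P r1" and "r2 = dropWhile P r1"
  have xs: "xs = u @ R @ v @ r2"
    by (simp add: u_def r0_def R_def r1_def v_def r2_def)
  have blocks: "\<forall>x\<in>set u. P x" "\<forall>x\<in>set R. \<not> P x" "\<forall>x\<in>set v. P x"
    by (auto simp: u_def R_def v_def dest: set_takeWhileD)
  consider "r0 = []" | "r0 \<noteq> []" "r2 = []" | "r0 \<noteq> []" "r2 \<noteq> []" by blast
  then show thesis
  proof cases
    case 1
    then show thesis using that(1) by (simp add: r0_def dropWhile_eq_Nil_conv)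
  next
    case 2
    then have "R \<noteq> []"
      using hd_dropWhile[of P xs] by (cases r0) (auto simp: R_def r0_def)
    then show thesis using that(2) xs blocks 2(2) by simp
  next
    case 3
    then have "r1 \<noteq> []" by (auto simp: r2_def)
    then have "R \<noteq> []" "v \<noteq> []"
      using 3(1) hd_dropWhile[of P xs] hd_dropWhile[of "Not \<circ> P" r0]
      by (cases r0; cases r1; auto simp: R_def r0_def v_def r1_def)+
    moreover obtain y r where "r2 = y # r" "\<not> P y"
      using 3(2) hd_dropWhile[of P r1] by (cases r2) (auto simp: r2_def)
    ultimately show thesis using that(3) xs blocks by simp
  qed
qed

lemma prod_interior_nth: "(\<Prod>l\<in>{1..length xs}. f ((x # xs @ [y]) ! l)) = prod_list (map f xs)"
  by (simp add: prod.atLeast1_atMost_eq prod.list_conv_set_nth atLeast0LessThan nth_append)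

lemma prod_list_eq_0: "(0::'a::semiring_1) \<in> set xs \<Longrightarrow> prod_list xs = 0"
  by (induction xs) auto

section \<open>The algebra \<open>B\<close>\<close>

locale ncps_B'_space =
  fixes sa :: "complex \<Rightarrow> 'a::ring_1 \<Rightarrow> 'a" and phi :: "'a \<Rightarrow> complex"
    and sf :: "complex \<Rightarrow> 'f::ring \<Rightarrow> 'f"
    and la :: "'a \<Rightarrow> 'f \<Rightarrow> 'f" and ra :: "'f \<Rightarrow> 'a \<Rightarrow> 'f" and Phi :: "'f \<Rightarrow> complex"
  assumes ncps: "ncps_B' sa phi sf la ra Phi"
begin

lemma sa_add: "sa c (x + y) = sa c x + sa c y"
  and sa_add_scalar: "sa (c + d) x = sa c x + sa d x"
  and sa_sa: "sa c (sa d x) = sa (c * d) x"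
  and sa_one: "sa 1 x = x"
  and sa_mult_left: "sa c (x * y) = sa c x * y"
  and sa_mult_right: "sa c (x * y) = x * sa c y"
  using ncps unfolding ncps_B'_def complex_alg_def by auto

lemma sf_add: "sf c (f + g) = sf c f + sf c g"
  and sf_add_scalar: "sf (c + d) f = sf c f + sf d f"
  and sf_sf: "sf c (sf d f) = sf (c * d) f"
  and sf_one: "sf 1 f = f"
  and sf_mult_left: "sf c (f * g) = sf c f * g"
  and sf_mult_right: "sf c (f * g) = f * sf c g"
  using ncps unfolding ncps_B'_def complex_alg_def by auto

lemma la_one: "la 1 f = f"
  and ra_one: "ra f 1 = f"
  and la_mult: "la (a * b) f = la a (la b f)"
  and ra_mult: "ra f (a * b) = ra (ra f a) b"
  and la_add_left: "la (a + b) f = la a f + la b f"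
  and la_add_right: "la a (f + g) = la a f + la a g"
  and ra_add_right: "ra f (a + b) = ra f a + ra f b"
  and ra_add_left: "ra (f + g) a = ra f a + ra g a"
  and la_sa: "la (sa c a) f = sf c (la a f)"
  and la_sf: "la a (sf c f) = sf c (la a f)"
  and ra_sa: "ra f (sa c a) = sf c (ra f a)"
  and ra_sf: "ra (sf c f) a = sf c (ra f a)"
  and ra_la: "ra (la a f) b = la a (ra f b)"
  and la_mult_F: "la a (f * g) = la a f * g"
  and ra_mult_F: "ra (f * g) a = f * ra g a"
  and ra_mult_la: "ra f a * g = f * la a g"
  using ncps unfolding ncps_B'_def bimodule_compat_def by auto

lemma phi_add: "phi (x + y) = phi x + phi y"
  and phi_sa: "phi (sa c x) = c * phi x"
  and phi_1: "phi 1 = 1"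
  and Phi_add: "Phi (f + g) = Phi f + Phi g"
  and Phi_sf: "Phi (sf c f) = c * Phi f"
  using ncps unfolding ncps_B'_def lin_functional_def by auto

lemma phi_0 [simp]: "phi 0 = 0"
  using phi_add[of 0 0] by simp

lemma Phi_0 [simp]: "Phi 0 = 0"
  using Phi_add[of 0 0] by simp

lemma sa_zero [simp]: "sa c 0 = 0" and sa_zero_scalar [simp]: "sa 0 x = 0"
  using sa_add[of c 0 0] sa_add_scalar[of 0 0 x] by simp_all

lemma sf_zero [simp]: "sf c 0 = 0" and sf_zero_scalar [simp]: "sf 0 f = 0"
  using sf_add[of c 0 0] sf_add_scalar[of 0 0 f] by simp_all

lemma la_zero [simp]: "la a 0 = 0" and la_zero_left [simp]: "la 0 f = 0"
  using la_add_right[of a 0 0] la_add_left[of 0 0 f] by simp_all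

lemma ra_zero [simp]: "ra f 0 = 0" and ra_zero_left [simp]: "ra 0 a = 0"
  using ra_add_right[of f 0 0] ra_add_left[of 0 0 a] by simp_all

lemma sa_minus_one: "sa (-1) x = - x"
  using sa_add_scalar[of 1 "-1" x] by (simp add: sa_one add_eq_0_iff)

lemma sf_minus_one: "sf (-1) f = - f"
  using sf_add_scalar[of 1 "-1" f] by (simp add: sf_one add_eq_0_iff)

lemma phi_sa_one [simp]: "phi (sa c 1) = c"
  by (simp add: phi_sa phi_1)

abbreviation mulB :: "'a \<times> 'f \<Rightarrow> 'a \<times> 'f \<Rightarrow> 'a \<times> 'f" where
  "mulB \<equiv> bmult la ra"

abbreviation phi\<^sub>B :: "'a \<times> 'f \<Rightarrow> complex" where
  "phi\<^sub>B \<equiv> phiB phi"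

abbreviation phi\<^sub>B' :: "'a \<times> 'f \<Rightarrow> complex" where
  "phi\<^sub>B' \<equiv> phiB' Phi"

definition scaleB :: "complex \<Rightarrow> 'a \<times> 'f \<Rightarrow> 'a \<times> 'f" where
  "scaleB c x = (sa c (fst x), sf c (snd x))"

lemma mulB_Pair [simp]: "mulB (a, f) (b, g) = (a * b, la a g + ra f b + f * g)"
  by (simp add: bmult_def)

lemma fst_mulB [simp]: "fst (mulB x y) = fst x * fst y"
  and snd_mulB [simp]: "snd (mulB x y) = la (fst x) (snd y) + ra (snd x) (fst y) + snd x * snd y"
  by (simp_all add: bmult_def)

lemma mulB_assoc: "mulB (mulB x y) z = mulB x (mulB y z)"
  by (simp add: prod_eq_iff mult.assoc la_add_right ra_add_left la_mult_F ra_mult_F ra_mult_la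
      la_mult ra_la ra_mult distrib_left distrib_right add_ac)

lemma mulB_one_left [simp]: "mulB (1, 0) x = x"
  and mulB_one_right [simp]: "mulB x (1, 0) = x"
  by (simp_all add: prod_eq_iff la_one ra_one)

lemma mulB_zero_left [simp]: "mulB 0 x = 0"
  and mulB_zero_right [simp]: "mulB x 0 = 0"
  by (simp_all add: prod_eq_iff)

lemma mulB_add_left: "mulB (x + y) z = mulB x z + mulB y z"
  and mulB_add_right: "mulB z (x + y) = mulB z x + mulB z y"
  by (simp_all add: prod_eq_iff distrib_left distrib_right la_add_left la_add_right
      ra_add_left ra_add_right add_ac)

lemma mulB_scaleB_left: "mulB (scaleB c x) y = scaleB c (mulB x y)"
  by (simp add: prod_eq_iff scaleB_def la_sa ra_sf sf_add sf_mult_left sa_mult_left)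

lemma mulB_scaleB_right: "mulB x (scaleB c y) = scaleB c (mulB x y)"
  by (simp add: prod_eq_iff scaleB_def la_sf ra_sa sf_add flip: sa_mult_right sf_mult_right)

lemma scaleB_add: "scaleB c (x + y) = scaleB c x + scaleB c y"
  and scaleB_add_scalar: "scaleB (c + d) x = scaleB c x + scaleB d x"
  and scaleB_scaleB: "scaleB c (scaleB d x) = scaleB (c * d) x"
  and scaleB_one [simp]: "scaleB 1 x = x"
  and scaleB_zero_scalar [simp]: "scaleB 0 x = 0"
  and scaleB_minus_one: "scaleB (-1) x = - x"
  by (simp_all add: scaleB_def prod_eq_iff sa_add sf_add sa_add_scalar sf_add_scalar sa_sa sf_sf
      sa_one sf_one sa_minus_one sf_minus_one)

lemma phiB_add: "phi\<^sub>B (x + y) = phi\<^sub>B x + phi\<^sub>B y"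
  and phiB_scaleB: "phi\<^sub>B (scaleB c x) = c * phi\<^sub>B x"
  and phiB'_add: "phi\<^sub>B' (x + y) = phi\<^sub>B' x + phi\<^sub>B' y"
  and phiB'_scaleB: "phi\<^sub>B' (scaleB c x) = c * phi\<^sub>B' x"
  and phiB_one [simp]: "phi\<^sub>B (1, 0) = 1"
  by (simp_all add: phiB_def phiB'_def scaleB_def phi_add phi_sa Phi_add Phi_sf phi_1)

lemma scaleB_diff: "scaleB c (x - y) = scaleB c x - scaleB c y"
  using scaleB_add[of c "x - y" y] by (simp add: eq_diff_eq)

lemma phiB_diff: "phi\<^sub>B (x - y) = phi\<^sub>B x - phi\<^sub>B y"
  using phiB_add[of "x - y" y] by simp

lemma bprod_Nil [simp]: "bprod la ra [] = (1, 0)"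
  and bprod_Cons [simp]: "bprod la ra (x # xs) = mulB x (bprod la ra xs)"
  by (simp_all add: bprod_def)

lemma bprod_append: "bprod la ra (xs @ ys) = mulB (bprod la ra xs) (bprod la ra ys)"
  by (induction xs) (simp_all add: mulB_assoc)

definition centerB :: "'a \<times> 'f \<Rightarrow> 'a \<times> 'f" where
  "centerB x = x - scaleB (phi\<^sub>B x) (1, 0)"

lemma phiB_centerB [simp]: "phi\<^sub>B (centerB x) = 0"
  by (simp add: centerB_def phiB_diff phiB_scaleB)

lemma centerB_decompose: "x = scaleB (phi\<^sub>B x) (1, 0) + centerB x"
  by (simp add: centerB_def)

lemma centerB_zero [simp]: "centerB 0 = 0"
  by (simp add: centerB_def phiB_def)

lemma centerB_centered: "phi\<^sub>B x = 0 \<Longrightarrow> centerB x = x"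
  by (simp add: centerB_def)

lemma centerB_add: "centerB (x + y) = centerB x + centerB y"
  and centerB_scaleB: "centerB (scaleB c x) = scaleB c (centerB x)"
  by (simp_all add: centerB_def phiB_add phiB_scaleB scaleB_add_scalar scaleB_diff scaleB_scaleB)

definition subalgB :: "('a \<times> 'f) set \<Rightarrow> bool" where
  "subalgB S \<longleftrightarrow> (1, 0) \<in> S \<and> (\<forall>x\<in>S. \<forall>y\<in>S. x + y \<in> S \<and> mulB x y \<in> S) \<and>
     (\<forall>c. \<forall>x\<in>S. scaleB c x \<in> S)"

lemma subalgB_centerB: "subalgB S \<Longrightarrow> x \<in> S \<Longrightarrow> centerB x \<in> S"
  unfolding subalgB_def centerB_def by (metis diff_conv_add_uminus scaleB_minus_one)

inductive_set spanB :: "('a \<times> 'f) set \<Rightarrow> ('a \<times> 'f) set" for X where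
  spanB_zero: "0 \<in> spanB X"
| spanB_base: "x \<in> X \<Longrightarrow> x \<in> spanB X"
| spanB_add: "x \<in> spanB X \<Longrightarrow> y \<in> spanB X \<Longrightarrow> x + y \<in> spanB X"
| spanB_scaleB: "x \<in> spanB X \<Longrightarrow> scaleB c x \<in> spanB X"

definition linB :: "('a \<times> 'f \<Rightarrow> complex) \<Rightarrow> bool" where
  "linB f \<longleftrightarrow> (\<forall>x y. f (x + y) = f x + f y) \<and> (\<forall>c x. f (scaleB c x) = c * f x)"

lemma linB_vanishes_on_span:
  assumes "linB f" and "\<forall>x\<in>X. f x = 0" and "x \<in> spanB X"
  shows "f x = 0"
  using assms(3)
proof (induction rule: spanB.induct)
  case spanB_zero
  then show ?case using assms(1) unfolding linB_def by (metis add_cancel_right_left add_0)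
qed (use assms in \<open>auto simp: linB_def\<close>)

lemmas linB_simps = mulB_add_left mulB_add_right mulB_scaleB_left mulB_scaleB_right
  phiB_add phiB'_add phiB_scaleB phiB'_scaleB

inductive_set genB :: "'k set \<Rightarrow> ('k \<Rightarrow> ('a \<times> 'f) set) \<Rightarrow> ('a \<times> 'f) set" for K Bf where
  genB_base: "k \<in> K \<Longrightarrow> x \<in> Bf k \<Longrightarrow> x \<in> genB K Bf"
| genB_one: "(1, 0) \<in> genB K Bf"
| genB_add: "x \<in> genB K Bf \<Longrightarrow> y \<in> genB K Bf \<Longrightarrow> x + y \<in> genB K Bf"
| genB_mult: "x \<in> genB K Bf \<Longrightarrow> y \<in> genB K Bf \<Longrightarrow> mulB x y \<in> genB K Bf"
| genB_scaleB: "x \<in> genB K Bf \<Longrightarrow> scaleB c x \<in> genB K Bf"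

lemma genB_mono: "x \<in> genB K Bf \<Longrightarrow> K \<subseteq> K' \<Longrightarrow> x \<in> genB K' Bf"
  by (induction rule: genB.induct) (auto intro: genB.intros)

section \<open>Centered words\<close>

definition centered_word :: "'k set \<Rightarrow> ('k \<Rightarrow> ('a \<times> 'f) set) \<Rightarrow> ('k \<times> ('a \<times> 'f)) list \<Rightarrow> bool" where
  "centered_word K Bf ws \<longleftrightarrow> alternating (map fst ws) \<and>
     (\<forall>p\<in>set ws. fst p \<in> K \<and> snd p \<in> Bf (fst p) \<and> phi\<^sub>B (snd p) = 0)"

definition word_prod :: "('k \<times> ('a \<times> 'f)) list \<Rightarrow> 'a \<times> 'f" where
  "word_prod ws = bprod la ra (map snd ws)"

lemma word_prod_Nil [simp]: "word_prod [] = (1, 0)"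
  and word_prod_Cons: "word_prod (p # ws) = mulB (snd p) (word_prod ws)"
  and word_prod_single [simp]: "word_prod [p] = snd p"
  and word_prod_append: "word_prod (xs @ ys) = mulB (word_prod xs) (word_prod ys)"
  by (simp_all add: word_prod_def bprod_append)

lemma fst_word_prod: "fst (word_prod ws) = prod_list (map (fst \<circ> snd) ws)"
  by (induction ws) (simp_all add: word_prod_Cons)

lemma centered_word_Nil [simp]: "centered_word K Bf []"
  by (simp add: centered_word_def)

lemma centered_word_Cons:
  "centered_word K Bf (p # ws) \<longleftrightarrow> (ws \<noteq> [] \<longrightarrow> fst p \<noteq> fst (hd ws)) \<and>
     fst p \<in> K \<and> snd p \<in> Bf (fst p) \<and> phi\<^sub>B (snd p) = 0 \<and> centered_word K Bf ws"
  by (auto simp: centered_word_def alternating_Cons hd_map)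

lemma centered_word_append:
  "centered_word K Bf (xs @ ys) \<longleftrightarrow> centered_word K Bf xs \<and> centered_word K Bf ys \<and>
     (xs \<noteq> [] \<and> ys \<noteq> [] \<longrightarrow> fst (last xs) \<noteq> fst (hd ys))"
  by (auto simp: centered_word_def alternating_append hd_map last_map)

lemma centered_word_single:
  "centered_word K Bf [p] \<longleftrightarrow> fst p \<in> K \<and> snd p \<in> Bf (fst p) \<and> phi\<^sub>B (snd p) = 0"
  by (simp add: centered_word_def)

lemma centered_word_labels: "centered_word K Bf ws \<Longrightarrow> fst ` set ws \<subseteq> K"
  by (auto simp: centered_word_def)

lemma centered_word_relabel:
  "centered_word K Bf ws \<Longrightarrow> fst ` set ws \<subseteq> K' \<Longrightarrow> centered_word K' Bf ws"
  by (auto simp: centered_word_def)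

lemma centered_word_mono: "centered_word K Bf ws \<Longrightarrow> K \<subseteq> K' \<Longrightarrow> centered_word K' Bf ws"
  by (auto simp: centered_word_def)

lemma word_prod_merge:
  "mulB (word_prod (u @ [a])) (word_prod (b # v)) =
     scaleB (phi\<^sub>B (mulB (snd a) (snd b))) (mulB (word_prod u) (word_prod v)) +
     word_prod (u @ [(fst a, centerB (mulB (snd a) (snd b)))] @ v)"
proof -
  have "mulB (word_prod (u @ [a])) (word_prod (b # v)) =
      mulB (word_prod u) (mulB (mulB (snd a) (snd b)) (word_prod v))"
    by (simp add: word_prod_append word_prod_Cons mulB_assoc)
  also have "\<dots> = mulB (word_prod u)
      (mulB (scaleB (phi\<^sub>B (mulB (snd a) (snd b))) (1, 0) + centerB (mulB (snd a) (snd b))) (word_prod v))"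
    by (subst centerB_decompose) (rule refl)
  finally show ?thesis
    by (simp add: linB_simps word_prod_append word_prod_Cons)
qed

lemma centered_word_merge:
  assumes "\<forall>k\<in>K. subalgB (Bf k)"
    and "centered_word K Bf (u @ [a])" and "centered_word K Bf (b # v)" and "fst a = fst b"
  shows "centered_word K Bf (u @ [(fst a, centerB (mulB (snd a) (snd b)))] @ v)"
proof -
  have "fst a \<in> K" "snd a \<in> Bf (fst a)" "snd b \<in> Bf (fst a)"
    using assms(2-4) by (auto simp: centered_word_append centered_word_Cons)
  then have "centerB (mulB (snd a) (snd b)) \<in> Bf (fst a)"
    using assms(1) by (meson subalgB_centerB subalgB_def)
  then show ?thesis
    using assms(2-4) by (auto simp: centered_word_append centered_word_Cons centered_word_single)
qed

definition word_span :: "'k set \<Rightarrow> ('k \<Rightarrow> ('a \<times> 'f) set) \<Rightarrow> ('a \<times> 'f) set" where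
  "word_span K Bf = spanB {word_prod w | w. centered_word K Bf w}"

definition proper_word_span :: "'k set \<Rightarrow> ('k \<Rightarrow> ('a \<times> 'f) set) \<Rightarrow> ('a \<times> 'f) set" where
  "proper_word_span K Bf = spanB {word_prod w | w. centered_word K Bf w \<and> w \<noteq> []}"

lemma linB_vanishes_on_word_span:
  assumes "linB f" and "\<And>w. centered_word K Bf w \<Longrightarrow> f (word_prod w) = 0"
    and "x \<in> word_span K Bf"
  shows "f x = 0"
  using linB_vanishes_on_span[OF assms(1) _ assms(3)[unfolded word_span_def]] assms(2) by blast

lemma linB_vanishes_on_proper_word_span:
  assumes "linB f" and "\<And>w. centered_word K Bf w \<Longrightarrow> w \<noteq> [] \<Longrightarrow> f (word_prod w) = 0"
    and "x \<in> proper_word_span K Bf"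
  shows "f x = 0"
  using linB_vanishes_on_span[OF assms(1) _ assms(3)[unfolded proper_word_span_def]] assms(2) by blast

lemma word_prod_in_word_span: "centered_word K Bf w \<Longrightarrow> word_prod w \<in> word_span K Bf"
  unfolding word_span_def by (auto intro: spanB_base)

lemma word_prod_in_proper_word_span:
  "centered_word K Bf w \<Longrightarrow> w \<noteq> [] \<Longrightarrow> word_prod w \<in> proper_word_span K Bf"
  unfolding proper_word_span_def by (auto intro: spanB_base)

lemma one_in_word_span: "(1, 0) \<in> word_span K Bf"
  using word_prod_in_word_span[of K Bf "[]"] by simp

lemma word_span_add: "x \<in> word_span K Bf \<Longrightarrow> y \<in> word_span K Bf \<Longrightarrow> x + y \<in> word_span K Bf"
  and word_span_scaleB: "x \<in> word_span K Bf \<Longrightarrow> scaleB c x \<in> word_span K Bf"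
  unfolding word_span_def by (simp_all add: spanB_add spanB_scaleB)

text \<open>Merging the two innermost letters when their labels agree shortens the product.\<close>

lemma mulB_word_prod_in_word_span:
  assumes sub: "\<forall>k\<in>K. subalgB (Bf k)"
  shows "centered_word K Bf u \<Longrightarrow> centered_word K Bf v \<Longrightarrow>
    mulB (word_prod u) (word_prod v) \<in> word_span K Bf"
proof (induction u arbitrary: v rule: rev_induct)
  case Nil
  then show ?case by (simp add: word_prod_in_word_span)
next
  case (snoc a u)
  show ?case
  proof (cases v)
    case Nil
    then show ?thesis using snoc.prems by (simp add: word_prod_in_word_span)
  next
    case (Cons b v')
    show ?thesis
    proof (cases "fst a = fst b")
      case False
      then have "centered_word K Bf ((u @ [a]) @ v)"
        by (subst centered_word_append) (use snoc.prems Cons in simp)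
      then show ?thesis by (metis word_prod_append word_prod_in_word_span)
    next
      case True
      have "centered_word K Bf u" "centered_word K Bf v'"
        using snoc.prems Cons by (auto simp: centered_word_append centered_word_Cons)
      then have "mulB (word_prod u) (word_prod v') \<in> word_span K Bf"
        using snoc.IH by blast
      moreover have "centered_word K Bf (u @ [(fst a, centerB (mulB (snd a) (snd b)))] @ v')"
        using centered_word_merge[OF sub snoc.prems(1) _ True] snoc.prems(2) Cons by simp
      ultimately show ?thesis
        unfolding Cons word_prod_merge
        by (intro word_span_add word_span_scaleB word_prod_in_word_span)
    qed
  qed
qed

lemma word_span_mult:
  assumes sub: "\<forall>k\<in>K. subalgB (Bf k)" and "x \<in> word_span K Bf" and "y \<in> word_span K Bf"
  shows "mulB x y \<in> word_span K Bf"
proof -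
  have word_left: "mulB (word_prod u) y \<in> word_span K Bf" if u: "centered_word K Bf u" for u
    using assms(3) unfolding word_span_def
  proof (induction rule: spanB.induct)
    case (spanB_base y)
    then show ?case
      using mulB_word_prod_in_word_span[OF sub u] unfolding word_span_def by blast
  qed (simp_all add: linB_simps spanB.intros)
  show ?thesis
    using assms(2) unfolding word_span_def
  proof (induction rule: spanB.induct)
    case (spanB_base x)
    then show ?case using word_left unfolding word_span_def by blast
  qed (simp_all add: linB_simps spanB.intros)
qed

lemma genB_subset_word_span:
  assumes sub: "\<forall>k\<in>K. subalgB (Bf k)"
  shows "x \<in> genB K Bf \<Longrightarrow> x \<in> word_span K Bf"
proof (induction rule: genB.induct)
  case (genB_base k x)
  then have "centered_word K Bf [(k, centerB x)]"
    using sub by (simp add: centered_word_single subalgB_centerB)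
  then have "scaleB (phi\<^sub>B x) (1, 0) + centerB x \<in> word_span K Bf"
    using word_prod_in_word_span[of K Bf "[(k, centerB x)]"]
    by (simp add: one_in_word_span word_span_add word_span_scaleB)
  then show ?case by (simp flip: centerB_decompose)
qed (use sub in \<open>auto intro: one_in_word_span word_span_add word_span_scaleB word_span_mult\<close>)

definition free_words :: "'k set \<Rightarrow> ('k \<Rightarrow> ('a \<times> 'f) set) \<Rightarrow> bool" where
  "free_words K Bf \<longleftrightarrow> (\<forall>w. centered_word K Bf w \<and> w \<noteq> [] \<longrightarrow> phi\<^sub>B (word_prod w) = 0)"

lemma free_wordsD: "free_words K Bf \<Longrightarrow> centered_word K Bf w \<Longrightarrow> w \<noteq> [] \<Longrightarrow> phi\<^sub>B (word_prod w) = 0"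
  by (simp add: free_words_def)

definition trivial_words :: "'k set \<Rightarrow> ('k \<Rightarrow> ('a \<times> 'f) set) \<Rightarrow> bool" where
  "trivial_words K Bf \<longleftrightarrow> (\<forall>w. centered_word K Bf w \<and> 2 \<le> length w \<longrightarrow> phi\<^sub>B' (word_prod w) = 0)"

lemma centerB_word_span:
  assumes "free_words K Bf" and "x \<in> word_span K Bf"
  shows "centerB x \<in> proper_word_span K Bf"
  using assms(2) unfolding word_span_def
proof (induction rule: spanB.induct)
  case (spanB_base x)
  then obtain w where w: "x = word_prod w" "centered_word K Bf w" by blast
  show ?case
  proof (cases "w = []")
    case True
    then show ?thesis using w by (simp add: centerB_def proper_word_span_def spanB_zero)
  next
    case False
    then show ?thesis
      using w free_wordsD[OF assms(1)] by (simp add: centerB_centered word_prod_in_proper_word_span)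
  qed
qed (simp_all add: centerB_add centerB_scaleB proper_word_span_def spanB.intros)

lemma centered_word_span:
  "free_words K Bf \<Longrightarrow> x \<in> word_span K Bf \<Longrightarrow> phi\<^sub>B x = 0 \<Longrightarrow> x \<in> proper_word_span K Bf"
  using centerB_word_span centerB_centered by metis

definition pair_value :: "'k \<times> ('a \<times> 'f) \<Rightarrow> 'k \<times> ('a \<times> 'f) \<Rightarrow> complex" where
  "pair_value p q = (if fst p = fst q then phi\<^sub>B (mulB (snd p) (snd q)) else 0)"

definition pairings :: "('k \<times> ('a \<times> 'f)) list \<Rightarrow> ('k \<times> ('a \<times> 'f)) list \<Rightarrow> complex" where
  "pairings xs ys = (if length xs = length ys then prod_list (map2 pair_value xs ys) else 0)"

lemma pairings_Nil_left: "pairings [] ys = (if ys = [] then 1 else 0)"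
  and pairings_Nil_right: "pairings xs [] = (if xs = [] then 1 else 0)"
  and pairings_Cons: "pairings (p # xs) (q # ys) = pair_value p q * pairings xs ys"
  and pairings_snoc: "pairings (xs @ [p]) (ys @ [q]) = pairings xs ys * pair_value p q"
  by (simp_all add: pairings_def mult.commute)

lemma phiB_mulB_word_prod:
  assumes sub: "\<forall>k\<in>K. subalgB (Bf k)" and free: "free_words K Bf"
  shows "centered_word K Bf u \<Longrightarrow> centered_word K Bf v \<Longrightarrow>
    phi\<^sub>B (mulB (word_prod u) (word_prod v)) = pairings u (rev v)"
proof (induction u arbitrary: v rule: rev_induct)
  case Nil
  then show ?case using free_wordsD[OF free] by (simp add: pairings_Nil_left)
next
  case (snoc a u)
  show ?case
  proof (cases v)
    case Nil
    then show ?thesis using free_wordsD[OF free] snoc.prems by (simp add: pairings_Nil_right)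
  next
    case (Cons b v')
    show ?thesis
    proof (cases "fst a = fst b")
      case False
      then have "centered_word K Bf ((u @ [a]) @ v)"
        by (subst centered_word_append) (use snoc.prems Cons in simp)
      then have "phi\<^sub>B (mulB (word_prod (u @ [a])) (word_prod v)) = 0"
        using free_wordsD[OF free] by (simp flip: word_prod_append)
      then show ?thesis using False Cons by (simp add: pairings_snoc pair_value_def)
    next
      case True
      have "centered_word K Bf u" "centered_word K Bf v'"
        using snoc.prems Cons by (auto simp: centered_word_append centered_word_Cons)
      then have "phi\<^sub>B (mulB (word_prod u) (word_prod v')) = pairings u (rev v')"
        using snoc.IH by blast
      moreover have "centered_word K Bf (u @ [(fst a, centerB (mulB (snd a) (snd b)))] @ v')"
        using centered_word_merge[OF sub snoc.prems(1) _ True] snoc.prems(2) Cons by simp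
      ultimately show ?thesis
        using free_wordsD[OF free] True
        unfolding Cons word_prod_merge by (simp add: phiB_add phiB_scaleB pairings_snoc pair_value_def)
    qed
  qed
qed

section \<open>Infinitesimal freeness on centered words\<close>

text \<open>The value that infinitesimal freeness prescribes for \<open>phi\<^sub>B'\<close> of a centered word; a
  mismatch of mirrored labels makes one factor \<open>pair_value\<close> vanish.\<close>

definition inf_value :: "('k \<times> ('a \<times> 'f)) list \<Rightarrow> complex" where
  "inf_value ws = (if odd (length ws)
     then (\<Prod>l<length ws div 2. pair_value (ws ! l) (rev ws ! l)) * phi\<^sub>B' (snd (ws ! (length ws div 2)))
     else 0)"

lemma inf_value_zip:
  assumes len: "length bs = length ks"
  shows "inf_value (zip ks bs) = (let n = length ks in
    if odd n \<and> (\<forall>l < n div 2. ks ! l = ks ! (n - 1 - l))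
    then (\<Prod>l<n div 2. phi\<^sub>B (mulB (bs ! l) (bs ! (n - 1 - l)))) * phi\<^sub>B' (bs ! (n div 2))
    else 0)"
proof -
  define n where "n = length ks"
  have nth: "zip ks bs ! l = (ks ! l, bs ! l)" "rev (zip ks bs) ! l = (ks ! (n - 1 - l), bs ! (n - 1 - l))"
    if "l < n div 2" for l
    using that len by (simp_all add: n_def rev_nth)
  show ?thesis
  proof (cases "odd n \<and> (\<forall>l < n div 2. ks ! l = ks ! (n - 1 - l))")
    case True
    then have "odd n" by simp
    then have "n div 2 < n" by presburger
    then show ?thesis
      using True len nth by (simp add: inf_value_def n_def[symmetric] pair_value_def)
  next
    case False
    then consider "even n" | l where "l < n div 2" "ks ! l \<noteq> ks ! (n - 1 - l)" by blast
    then have "inf_value (zip ks bs) = 0"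
    proof cases
      case 2
      then have "(\<Prod>l<n div 2. pair_value (zip ks bs ! l) (rev (zip ks bs) ! l)) = 0"
        using nth by (intro prod_zero) (auto simp: pair_value_def intro!: bexI[of _ l])
      then show ?thesis using len by (simp add: inf_value_def n_def)
    qed (use len in \<open>simp add: inf_value_def n_def\<close>)
    then show ?thesis unfolding Let_def n_def[symmetric] if_not_P[OF False] .
  qed
qed

lemma centered_word_zip:
  assumes "length bs = length ks"
  shows "centered_word K Bf (zip ks bs) \<longleftrightarrow> set ks \<subseteq> K \<and> alternating ks \<and>
    (\<forall>l < length ks. bs ! l \<in> Bf (ks ! l) \<and> phi\<^sub>B (bs ! l) = 0)"
proof -
  have "set (zip ks bs) = (\<lambda>l. (ks ! l, bs ! l)) ` {..<length ks}"
    using assms by (auto simp: set_zip)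
  moreover have "set ks \<subseteq> K \<longleftrightarrow> (\<forall>l < length ks. ks ! l \<in> K)"
    by (auto simp: set_conv_nth)
  ultimately show ?thesis
    using assms by (auto simp: centered_word_def)
qed

lemma inf_freeD:
  assumes inf: "inf_free la ra phi Phi K Bf" and ws: "centered_word K Bf ws" "ws \<noteq> []"
  shows "phi\<^sub>B (word_prod ws) = 0 \<and> phi\<^sub>B' (word_prod ws) = inf_value ws"
proof -
  let ?ks = "map fst ws" and ?bs = "map snd ws"
  have zip: "zip ?ks ?bs = ws" by (rule zip_map_fst_snd)
  then have cond: "?ks \<noteq> [] \<and> length ?bs = length ?ks \<and> set ?ks \<subseteq> K \<and> alternating ?ks \<and>
      (\<forall>l < length ?ks. ?bs ! l \<in> Bf (?ks ! l) \<and> phiB phi (?bs ! l) = 0)"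
    using ws centered_word_zip[of ?bs ?ks] by simp
  have val: "inf_value ws = (let n = length ?ks in
      if odd n \<and> (\<forall>l < n div 2. ?ks ! l = ?ks ! (n - 1 - l))
      then (\<Prod>l<n div 2. phi\<^sub>B (mulB (?bs ! l) (?bs ! (n - 1 - l)))) * phi\<^sub>B' (?bs ! (n div 2))
      else 0)"
    using inf_value_zip[of ?bs ?ks] by (simp only: zip length_map)
  from inf[unfolded inf_free_def, rule_format, OF cond] show ?thesis
    unfolding word_prod_def val by (simp only: Let_def)
qed

lemma inf_freeI:
  assumes "\<And>ws. centered_word K Bf ws \<Longrightarrow> ws \<noteq> [] \<Longrightarrow>
    phi\<^sub>B (word_prod ws) = 0 \<and> phi\<^sub>B' (word_prod ws) = inf_value ws"
  shows "inf_free la ra phi Phi K Bf"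
  unfolding inf_free_def
proof (intro allI impI)
  fix ks bs
  assume a: "ks \<noteq> [] \<and> length bs = length ks \<and> set ks \<subseteq> K \<and> alternating ks \<and>
    (\<forall>l < length ks. bs ! l \<in> Bf (ks ! l) \<and> phiB phi (bs ! l) = 0)"
  then have len: "length bs = length ks" by simp
  have "centered_word K Bf (zip ks bs)" "zip ks bs \<noteq> []"
    using a centered_word_zip[OF len] by auto
  then have "phi\<^sub>B (word_prod (zip ks bs)) = 0 \<and> phi\<^sub>B' (word_prod (zip ks bs)) = inf_value (zip ks bs)"
    by (rule assms)
  moreover have "word_prod (zip ks bs) = bprod la ra bs"
    using len by (simp add: word_prod_def)
  ultimately show "let n = length ks in phi\<^sub>B (bprod la ra bs) = 0 \<and> phi\<^sub>B' (bprod la ra bs) =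
    (if odd n \<and> (\<forall>l<n div 2. ks ! l = ks ! (n - 1 - l))
     then (\<Prod>l<n div 2. phi\<^sub>B (mulB (bs ! l) (bs ! (n - 1 - l)))) * phi\<^sub>B' (bs ! (n div 2))
     else 0)"
    unfolding inf_value_zip[OF len] by (simp only: Let_def)
qed

lemma inf_value_single [simp]: "inf_value [p] = phi\<^sub>B' (snd p)"
  by (simp_all add: inf_value_def)

lemma inf_value_Cons_snoc: "inf_value (a # mid @ [b]) = pair_value a b * inf_value mid"
proof (cases "odd (length mid)")
  case True
  define h where "h = length mid div 2"
  have "h < length mid" using True unfolding h_def by presburger
  then have "(\<Prod>l<Suc h. pair_value ((a # mid @ [b]) ! l) (rev (a # mid @ [b]) ! l)) =
      pair_value a b * (\<Prod>l<h. pair_value (mid ! l) (rev mid ! l))"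
    unfolding prod.lessThan_Suc_shift by (auto simp: nth_append intro!: prod.cong)
  moreover have "(a # mid @ [b]) ! Suc h = mid ! h"
    using \<open>h < length mid\<close> by (simp add: nth_append)
  ultimately show ?thesis
    using True by (simp add: inf_value_def h_def[symmetric] del: prod.lessThan_Suc)
qed (simp add: inf_value_def)

lemma inf_value_middle:
  "k \<notin> fst ` set u \<Longrightarrow> k \<notin> fst ` set v \<Longrightarrow>
    inf_value (u @ [(k, x)] @ v) = pairings u (rev v) * phi\<^sub>B' x"
proof (induction u arbitrary: v)
  case Nil
  show ?case
  proof (cases v rule: rev_exhaust)
    case (snoc v' b)
    then show ?thesis
      using Nil.prems inf_value_Cons_snoc[of "(k, x)" v' b] by (auto simp: pairings_Nil_left pair_value_def)
  qed (simp add: pairings_Nil_left)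
next
  case (Cons a u)
  show ?case
  proof (cases v rule: rev_exhaust)
    case Nil
    then show ?thesis
      using Cons.prems inf_value_Cons_snoc[of a u "(k, x)"] by (auto simp: pairings_Nil_right pair_value_def)
  next
    case (snoc v' b)
    then show ?thesis
      using Cons inf_value_Cons_snoc[of a "u @ [(k, x)] @ v'" b] by (simp add: pairings_Cons)
  qed
qed

lemma pair_value_F_letter: "fst (snd p) = 0 \<or> fst (snd q) = 0 \<Longrightarrow> pair_value p q = 0"
  by (auto simp: pair_value_def phiB_def)

text \<open>Letters with vanishing \<open>A\<close>-part can neither sit in the middle together nor be paired.\<close>

lemma inf_value_two_F_letters:
  "fst (snd y) = 0 \<Longrightarrow> fst (snd z) = 0 \<Longrightarrow> inf_value (p @ [y] @ q @ [z] @ r) = 0"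
proof (induction p arbitrary: r)
  case Nil
  obtain mid b where "q @ [z] @ r = mid @ [b]" by (metis append_is_Nil_conv rev_exhaust not_Cons_self)
  then show ?case using Nil inf_value_Cons_snoc[of y mid b] by (simp add: pair_value_F_letter)
next
  case (Cons a p)
  show ?case
  proof (cases r rule: rev_exhaust)
    case Nil
    then show ?thesis
      using Cons.prems inf_value_Cons_snoc[of a "p @ [y] @ q" z] by (simp add: pair_value_F_letter)
  next
    case (snoc r' b)
    then show ?thesis
      using Cons inf_value_Cons_snoc[of a "p @ [y] @ q @ [z] @ r'" b] by simp
  qed
qed

lemma inf_value_no_F_part:
  assumes "\<forall>p\<in>set ws. snd (snd p) = 0"
  shows "inf_value ws = 0"
proof (cases "odd (length ws)")
  case True
  then have "length ws div 2 < length ws" by presburger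
  then have "snd (snd (ws ! (length ws div 2))) = 0" using assms nth_mem by blast
  then show ?thesis by (simp add: inf_value_def phiB'_def)
qed (simp add: inf_value_def)

lemma inf_free_free_words: "inf_free la ra phi Phi K Bf \<Longrightarrow> K' \<subseteq> K \<Longrightarrow> free_words K' Bf"
  unfolding free_words_def using inf_freeD centered_word_mono by blast

lemma cyc_antimonotoneD:
  assumes cyc: "cyc_antimonotone phi la ra Phi A0 F0"
    and "c0 \<in> A0" "cl \<in> A0" "set cs \<subseteq> A0" "set gs \<subseteq> F0" "length gs = Suc (length cs)"
  shows "Phi (snd (bprod la ra (interleave (c0 # cs @ [cl]) gs))) =
    phi (c0 * cl) * prod_list (map phi cs) * Phi (fprod gs)"
proof -
  have "1 \<le> Suc (length cs) \<and> length (c0 # cs @ [cl]) = Suc (length cs) + 1 \<and>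
      length gs = Suc (length cs) \<and> set (c0 # cs @ [cl]) \<subseteq> A0 \<and> set gs \<subseteq> F0"
    using assms(2-) by simp
  from cyc[unfolded cyc_antimonotone_def, rule_format, OF this] show ?thesis
    unfolding diff_Suc_1 prod_interior_nth nth_Cons_0 nth_Cons_Suc nth_append_length .
qed

lemma cyc_antimonotoneI:
  assumes "\<And>c0 cs cl gs. c0 \<in> A0 \<Longrightarrow> cl \<in> A0 \<Longrightarrow> set cs \<subseteq> A0 \<Longrightarrow> set gs \<subseteq> F0 \<Longrightarrow>
    length gs = Suc (length cs) \<Longrightarrow>
    Phi (snd (bprod la ra (interleave (c0 # cs @ [cl]) gs))) =
      phi (c0 * cl) * prod_list (map phi cs) * Phi (fprod gs)"
  shows "cyc_antimonotone phi la ra Phi A0 F0"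
  unfolding cyc_antimonotone_def
proof (intro allI impI)
  fix n cs' gs
  assume a: "1 \<le> n \<and> length cs' = n + 1 \<and> length gs = n \<and> set cs' \<subseteq> A0 \<and> set gs \<subseteq> F0"
  then obtain c0 rest where "cs' = c0 # rest" "rest \<noteq> []"
    by (cases cs') force+
  then obtain cs cl where cs': "cs' = c0 # cs @ [cl]"
    by (metis rev_exhaust)
  have n: "n = Suc (length cs)" using a cs' by simp
  have "Phi (snd (bprod la ra (interleave cs' gs))) =
      phi (c0 * cl) * prod_list (map phi cs) * Phi (fprod gs)"
    using assms a unfolding cs' n by simp
  then show "Phi (snd (bprod la ra (interleave cs' gs))) =
      phi (cs' ! 0 * cs' ! n) * (\<Prod>l\<in>{1..n - 1}. phi (cs' ! l)) * Phi (fprod gs)"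
    unfolding cs' n diff_Suc_1 prod_interior_nth nth_Cons_0 nth_Cons_Suc nth_append_length .
qed

end

section \<open>Families of subalgebras of \<open>A\<close>-type and \<open>F\<close>-type\<close>

locale B'_family = ncps_B'_space sa phi sf la ra Phi
  for sa :: "complex \<Rightarrow> 'a::ring_1 \<Rightarrow> 'a" and phi and sf :: "complex \<Rightarrow> 'f::ring \<Rightarrow> 'f"
    and la ra Phi +
  fixes KA :: "'k set" and KF :: "'k set" and Bf :: "'k \<Rightarrow> ('a \<times> 'f) set"
    and AA :: "'a set" and GG :: "'f set"
  assumes labels_disjoint: "KA \<inter> KF = {}"
    and subalgebras: "\<forall>k \<in> KA \<union> KF. subalgB (Bf k)"
    and A_labels: "\<forall>k\<in>KA. \<forall>b\<in>Bf k. snd b = 0 \<and> fst b \<in> AA"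
    and F_labels: "\<forall>k\<in>KF. \<forall>b\<in>Bf k. phi\<^sub>B b = 0 \<longrightarrow> fst b = 0 \<and> snd b \<in> GG"
    and AA_one: "1 \<in> AA" and AA_mult: "\<forall>x\<in>AA. \<forall>y\<in>AA. x * y \<in> AA"
    and GG_mult: "\<forall>x\<in>GG. \<forall>y\<in>GG. x * y \<in> GG"
    and AA_generated: "\<forall>c\<in>AA. (c, 0) \<in> genB KA Bf"
    and GG_generated: "\<forall>g\<in>GG. (0, g) \<in> genB KF Bf"
begin

lemma subalgebras_A: "\<forall>k\<in>KA. subalgB (Bf k)"
  and subalgebras_F: "\<forall>k\<in>KF. subalgB (Bf k)"
  using subalgebras by simp_all

lemma A_letter:
  "centered_word (KA \<union> KF) Bf ws \<Longrightarrow> p \<in> set ws \<Longrightarrow> fst p \<in> KA \<Longrightarrow> snd (snd p) = 0 \<and> fst (snd p) \<in> AA"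
  using A_labels by (auto simp: centered_word_def)

lemma F_letter:
  "centered_word (KA \<union> KF) Bf ws \<Longrightarrow> p \<in> set ws \<Longrightarrow> fst p \<in> KF \<Longrightarrow> fst (snd p) = 0 \<and> snd (snd p) \<in> GG"
  using F_labels by (auto simp: centered_word_def)

lemma centered_word_A_F_A:
  assumes u: "centered_word KA Bf u" and G: "centered_word KF Bf G" "G \<noteq> []"
    and v: "centered_word KA Bf v"
  shows "centered_word (KA \<union> KF) Bf (u @ G @ v)"
proof -
  have "fst (hd G) \<in> KF" "fst (last G) \<in> KF"
    using G centered_word_labels hd_in_set last_in_set by blast+
  moreover have "u \<noteq> [] \<Longrightarrow> fst (last u) \<in> KA" "v \<noteq> [] \<Longrightarrow> fst (hd v) \<in> KA"
    using centered_word_labels[OF u] centered_word_labels[OF v] hd_in_set last_in_set by blast+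
  ultimately show ?thesis
    using u v G labels_disjoint
    by (auto simp: centered_word_append intro: centered_word_mono)
qed

lemma centered_word_A_F_A_F:
  assumes u: "centered_word KA Bf u" and G1: "centered_word KF Bf G1" "G1 \<noteq> []"
    and w: "centered_word KA Bf w" "w \<noteq> []" and G2: "centered_word KF Bf G2" "G2 \<noteq> []"
  shows "centered_word (KA \<union> KF) Bf (u @ G1 @ w @ G2)"
proof -
  have "fst (last w) \<in> KA"
    using centered_word_labels[OF w(1)] last_in_set[OF w(2)] by blast
  moreover have "fst (hd G2) \<in> KF"
    using centered_word_labels[OF G2(1)] hd_in_set[OF G2(2)] by blast
  ultimately have "centered_word (KA \<union> KF) Bf ((u @ G1 @ w) @ G2)"
    using centered_word_A_F_A[OF u G1 w(1)] centered_word_mono[OF G2(1)] labels_disjoint w(2) G2(2)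
    by (subst centered_word_append) auto
  then show ?thesis by simp
qed

lemma inf_free_phiB'_words_A_F_A:
  assumes inf: "inf_free la ra phi Phi (KA \<union> KF) Bf"
    and u: "centered_word KA Bf u" and G: "centered_word KF Bf G" "G \<noteq> []"
    and v: "centered_word KA Bf v"
  shows "phi\<^sub>B' (mulB (word_prod u) (mulB (word_prod G) (word_prod v))) =
    phi\<^sub>B (mulB (word_prod u) (word_prod v)) * phi\<^sub>B' (word_prod G)"
proof -
  have W: "centered_word (KA \<union> KF) Bf (u @ G @ v)"
    using centered_word_A_F_A[OF u G v] .
  then have val: "phi\<^sub>B' (mulB (word_prod u) (mulB (word_prod G) (word_prod v))) = inf_value (u @ G @ v)"
    using inf_freeD[OF inf W] G(2) by (simp add: word_prod_append)
  show ?thesis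
  proof (cases G)
    case (Cons g G')
    show ?thesis
    proof (cases G')
      case Nil
      have "fst g \<in> KF" using centered_word_labels[OF G(1)] Cons by auto
      then have "fst g \<notin> fst ` set u" "fst g \<notin> fst ` set v"
        using labels_disjoint centered_word_labels[OF u] centered_word_labels[OF v] by blast+
      then have "inf_value (u @ [(fst g, snd g)] @ v) = pairings u (rev v) * phi\<^sub>B' (snd g)"
        by (rule inf_value_middle)
      moreover have "phi\<^sub>B (mulB (word_prod u) (word_prod v)) = pairings u (rev v)"
        using phiB_mulB_word_prod[OF subalgebras_A inf_free_free_words[OF inf] u v] by simp
      ultimately show ?thesis using val Cons Nil by simp
    next
      case (Cons g' G'')
      have "fst (snd g) = 0" "fst (snd g') = 0"
        using centered_word_labels[OF G(1)] \<open>G = g # G'\<close> Cons F_letter[OF centered_word_mono[OF G(1)]]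
        by auto
      then have "inf_value (u @ [g] @ [] @ [g'] @ G'' @ v) = 0"
        "inf_value ([] @ [g] @ [] @ [g'] @ G'') = 0"
        by (rule inf_value_two_F_letters)+
      moreover have "phi\<^sub>B' (word_prod G) = inf_value G"
        using inf_freeD[OF inf centered_word_mono[OF G(1)]] G(2) by blast
      ultimately show ?thesis using val \<open>G = g # G'\<close> Cons by simp
    qed
  qed (use G in simp)
qed

lemma inf_free_phiB'_A_F_A:
  assumes inf: "inf_free la ra phi Phi (KA \<union> KF) Bf" and x: "x \<in> word_span KA Bf"
    and y: "y \<in> proper_word_span KF Bf" and z: "z \<in> word_span KA Bf"
  shows "phi\<^sub>B' (mulB x (mulB y z)) = phi\<^sub>B (mulB x z) * phi\<^sub>B' y"
proof -
  define f where "f x y z = phi\<^sub>B' (mulB x (mulB y z)) - phi\<^sub>B (mulB x z) * phi\<^sub>B' y" for x y z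
  have lin: "linB (\<lambda>x. f x y z)" "linB (\<lambda>y. f x y z)" "linB (\<lambda>z. f x y z)" for x y z
    unfolding f_def linB_def by (simp_all add: linB_simps algebra_simps del: split_paired_All)
  have "f (word_prod u) (word_prod G) (word_prod v) = 0"
    if "centered_word KA Bf u" "centered_word KF Bf G" "G \<noteq> []" "centered_word KA Bf v" for u G v
    unfolding f_def using inf_free_phiB'_words_A_F_A[OF inf that] by simp
  then have "f (word_prod u) (word_prod G) z = 0"
    if "centered_word KA Bf u" "centered_word KF Bf G" "G \<noteq> []" for u G
    using linB_vanishes_on_word_span[OF lin(3) _ z] that by blast
  then have "f (word_prod u) y z = 0" if "centered_word KA Bf u" for u
    using linB_vanishes_on_proper_word_span[OF lin(2) _ y] that by blast
  then have "f x y z = 0"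
    using linB_vanishes_on_word_span[OF lin(1) _ x] by blast
  then show ?thesis unfolding f_def by simp
qed

lemma inf_free_phiB'_words_A_F_A_F:
  assumes inf: "inf_free la ra phi Phi (KA \<union> KF) Bf"
    and u: "centered_word KA Bf u" and G1: "centered_word KF Bf G1" "G1 \<noteq> []"
    and w: "centered_word KA Bf w" "w \<noteq> []"
    and G2: "centered_word KF Bf G2" "G2 \<noteq> []" and t: "centered_word (KA \<union> KF) Bf t"
  shows "phi\<^sub>B' (mulB (word_prod u) (mulB (word_prod G1) (mulB (word_prod w)
    (mulB (word_prod G2) (word_prod t))))) = 0"
proof -
  obtain g1 G1' where g1: "G1 = g1 # G1'" using G1(2) by (cases G1) auto
  obtain G2' g2 where g2: "G2 = G2' @ [g2]" using G2(2) by (cases G2 rule: rev_exhaust) auto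
  define W' where "W' = u @ [g1] @ G1' @ w @ G2'"
  have "fst g2 \<in> KF"
    using centered_word_labels[OF G2(1)] unfolding g2 by simp
  have W: "centered_word (KA \<union> KF) Bf (W' @ [g2])"
    using centered_word_A_F_A_F[OF u G1 w G2] by (simp add: W'_def g1 g2)
  have F0: "fst (snd g1) = 0" "fst (snd g2) = 0"
    using W F_letter centered_word_labels[OF G1(1)] g1 \<open>fst g2 \<in> KF\<close> by (auto simp: W'_def)
  have prod: "mulB (word_prod u) (mulB (word_prod G1) (mulB (word_prod w)
      (mulB (word_prod G2) (word_prod t)))) = mulB (word_prod (W' @ [g2])) (word_prod t)"
    by (simp add: W'_def g1 g2 word_prod_append word_prod_Cons mulB_assoc)
  show ?thesis
  proof (cases "t \<noteq> [] \<and> fst g2 = fst (hd t)")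
    case False
    then have "centered_word (KA \<union> KF) Bf ((W' @ [g2]) @ t)"
      using W t by (subst centered_word_append) auto
    then have "phi\<^sub>B' (word_prod ((W' @ [g2]) @ t)) = inf_value ((W' @ [g2]) @ t)"
      using inf_freeD[OF inf] by blast
    also have "\<dots> = 0"
      using inf_value_two_F_letters[OF F0, of u "G1' @ w @ G2'" t] by (simp add: W'_def)
    finally show ?thesis unfolding prod word_prod_append .
  next
    case True
    then obtain b t' where t': "t = b # t'" "fst g2 = fst b" by (cases t) auto
    define z where "z = centerB (mulB (snd g2) (snd b))"
    have Wz: "centered_word (KA \<union> KF) Bf (W' @ [(fst g2, z)] @ t')"
      unfolding z_def by (rule centered_word_merge[OF subalgebras W t[unfolded t'(1)] t'(2)])
    then have zF: "fst z = 0"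
      using F_letter[OF Wz, of "(fst g2, z)"] \<open>fst g2 \<in> KF\<close> by simp
    moreover have "phi\<^sub>B (mulB (snd g2) (snd b)) = 0"
      using F0 by (simp add: phiB_def)
    ultimately have "mulB (word_prod (W' @ [g2])) (word_prod t) = word_prod (W' @ [(fst g2, z)] @ t')"
      unfolding t'(1) word_prod_merge z_def by simp
    moreover have "phi\<^sub>B' (word_prod (W' @ [(fst g2, z)] @ t')) =
        inf_value (u @ [g1] @ (G1' @ w @ G2') @ [(fst g2, z)] @ t')"
      using inf_freeD[OF inf Wz] by (simp add: W'_def)
    ultimately show ?thesis
      using inf_value_two_F_letters[of g1 "(fst g2, z)" u "G1' @ w @ G2'" t'] F0 zF prod by simp
  qed
qed

lemma inf_free_phiB'_A_F_A_F:
  assumes inf: "inf_free la ra phi Phi (KA \<union> KF) Bf"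
    and x: "x \<in> word_span KA Bf" and y1: "y1 \<in> proper_word_span KF Bf"
    and z: "z \<in> proper_word_span KA Bf" and y2: "y2 \<in> proper_word_span KF Bf"
    and t: "t \<in> word_span (KA \<union> KF) Bf"
  shows "phi\<^sub>B' (mulB x (mulB y1 (mulB z (mulB y2 t)))) = 0"
proof -
  define f where "f x y1 z y2 t = phi\<^sub>B' (mulB x (mulB y1 (mulB z (mulB y2 t))))" for x y1 z y2 t
  have lin: "linB (\<lambda>x. f x y1 z y2 t)" "linB (\<lambda>y1. f x y1 z y2 t)" "linB (\<lambda>z. f x y1 z y2 t)"
    "linB (\<lambda>y2. f x y1 z y2 t)" "linB (\<lambda>t. f x y1 z y2 t)" for x y1 z y2 t
    unfolding f_def linB_def by (simp_all add: linB_simps del: split_paired_All)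
  have "f (word_prod u) (word_prod G1) (word_prod w) (word_prod G2) (word_prod v) = 0"
    if "centered_word KA Bf u" "centered_word KF Bf G1" "G1 \<noteq> []" "centered_word KA Bf w" "w \<noteq> []"
      "centered_word KF Bf G2" "G2 \<noteq> []" "centered_word (KA \<union> KF) Bf v" for u G1 w G2 v
    unfolding f_def by (rule inf_free_phiB'_words_A_F_A_F[OF inf that])
  then have "f (word_prod u) (word_prod G1) (word_prod w) (word_prod G2) t = 0"
    if "centered_word KA Bf u" "centered_word KF Bf G1" "G1 \<noteq> []" "centered_word KA Bf w" "w \<noteq> []"
      "centered_word KF Bf G2" "G2 \<noteq> []" for u G1 w G2
    using linB_vanishes_on_word_span[OF lin(5) _ t] that by blast
  then have "f (word_prod u) (word_prod G1) (word_prod w) y2 t = 0"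
    if "centered_word KA Bf u" "centered_word KF Bf G1" "G1 \<noteq> []" "centered_word KA Bf w" "w \<noteq> []"
    for u G1 w
    using linB_vanishes_on_proper_word_span[OF lin(4) _ y2] that by blast
  then have "f (word_prod u) (word_prod G1) z y2 t = 0"
    if "centered_word KA Bf u" "centered_word KF Bf G1" "G1 \<noteq> []" for u G1
    using linB_vanishes_on_proper_word_span[OF lin(3) _ z] that by blast
  then have "f (word_prod u) y1 z y2 t = 0" if "centered_word KA Bf u" for u
    using linB_vanishes_on_proper_word_span[OF lin(2) _ y1] that by blast
  then show ?thesis
    using linB_vanishes_on_word_span[OF lin(1) _ x] unfolding f_def by blast
qed

lemma AA_in_word_span: "c \<in> AA \<Longrightarrow> (c, 0) \<in> word_span KA Bf"
  using AA_generated genB_subset_word_span[OF subalgebras_A] by blast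

lemma interleave_in_word_span:
  "set cs \<subseteq> AA \<Longrightarrow> set gs \<subseteq> GG \<Longrightarrow> bprod la ra (interleave cs gs) \<in> word_span (KA \<union> KF) Bf"
proof -
  have A: "(c, 0) \<in> genB (KA \<union> KF) Bf" if "c \<in> AA" for c
    using AA_generated that genB_mono[of "(c, 0)" KA Bf "KA \<union> KF"] by blast
  have G: "(0, g) \<in> genB (KA \<union> KF) Bf" if "g \<in> GG" for g
    using GG_generated that genB_mono[of "(0, g)" KF Bf "KA \<union> KF"] by blast
  have "bprod la ra (interleave cs gs) \<in> genB (KA \<union> KF) Bf"
    if "set cs \<subseteq> AA" "set gs \<subseteq> GG"
    using that by (induction cs gs rule: interleave.induct) (auto intro: genB_mult genB_one A G)
  then show "set cs \<subseteq> AA \<Longrightarrow> set gs \<subseteq> GG \<Longrightarrow> ?thesis"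
    using genB_subset_word_span[OF subalgebras] by blast
qed

context
  assumes inf: "inf_free la ra phi Phi (KA \<union> KF) Bf"
begin

lemma centerB_AA_in_proper_word_span: "c \<in> AA \<Longrightarrow> centerB (c, 0) \<in> proper_word_span KA Bf"
  using centerB_word_span[OF inf_free_free_words[OF inf] AA_in_word_span] by blast

lemma GG_in_proper_word_span: "g \<in> GG \<Longrightarrow> (0, g) \<in> proper_word_span KF Bf"
  using GG_generated genB_subset_word_span[OF subalgebras_F] centered_word_span[OF inf_free_free_words[OF inf]]
  by (simp add: phiB_def)

lemma inf_free_phiB'_interleave:
  "c0 \<in> AA \<Longrightarrow> cl \<in> AA \<Longrightarrow> set cs \<subseteq> AA \<Longrightarrow> set gs \<subseteq> GG \<Longrightarrow> length gs = Suc (length cs) \<Longrightarrow>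
    phi\<^sub>B' (bprod la ra (interleave (c0 # cs @ [cl]) gs)) =
      phi (c0 * cl) * prod_list (map phi cs) * Phi (fprod gs)"
proof (induction cs arbitrary: gs)
  case Nil
  then obtain g where "gs = [g]" "g \<in> GG" by (cases gs) auto
  then show ?case
    using inf_free_phiB'_A_F_A[OF inf AA_in_word_span GG_in_proper_word_span AA_in_word_span, of c0 g cl]
      Nil.prems by (simp add: phiB_def phiB'_def)
next
  case (Cons c1 cs)
  then obtain g1 g2 gs' where gs: "gs = g1 # g2 # gs'" by (metis length_Suc_conv)
  define T where "T = bprod la ra (interleave (cs @ [cl]) gs')"
  have in_sets: "c1 \<in> AA" "g1 \<in> GG" "g2 \<in> GG" "set cs \<subseteq> AA" "set gs' \<subseteq> GG"
    using Cons.prems gs by auto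
  have "bprod la ra (interleave (c0 # (c1 # cs) @ [cl]) gs) =
      mulB (c0, 0) (mulB (0, g1) (mulB (scaleB (phi c1) (1, 0) + centerB (c1, 0)) (mulB (0, g2) T)))"
    using centerB_decompose[of "(c1, 0)"] by (simp add: gs T_def phiB_def)
  also have "\<dots> = scaleB (phi c1) (mulB (c0, 0) (mulB (0, g1 * g2) T)) +
      mulB (c0, 0) (mulB (0, g1) (mulB (centerB (c1, 0)) (mulB (0, g2) T)))"
    by (simp add: linB_simps la_one flip: mulB_assoc)
  finally have "phi\<^sub>B' (bprod la ra (interleave (c0 # (c1 # cs) @ [cl]) gs)) =
      phi c1 * phi\<^sub>B' (mulB (c0, 0) (mulB (0, g1 * g2) T)) +
      phi\<^sub>B' (mulB (c0, 0) (mulB (0, g1) (mulB (centerB (c1, 0)) (mulB (0, g2) T))))"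
    by (simp only: phiB'_add phiB'_scaleB)
  also have "phi\<^sub>B' (mulB (c0, 0) (mulB (0, g1) (mulB (centerB (c1, 0)) (mulB (0, g2) T)))) = 0"
    using Cons.prems in_sets unfolding T_def
    by (intro inf_free_phiB'_A_F_A_F[OF inf] AA_in_word_span GG_in_proper_word_span
        centerB_AA_in_proper_word_span interleave_in_word_span) auto
  also have "mulB (c0, 0) (mulB (0, g1 * g2) T) = bprod la ra (interleave (c0 # cs @ [cl]) ((g1 * g2) # gs'))"
    by (simp add: T_def)
  also have "phi\<^sub>B' \<dots> = phi (c0 * cl) * prod_list (map phi cs) * Phi (fprod ((g1 * g2) # gs'))"
    using Cons.IH[of "(g1 * g2) # gs'"] Cons.prems in_sets GG_mult gs by simp
  also have "fprod ((g1 * g2) # gs') = fprod gs"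
    by (cases gs') (simp_all add: gs mult.assoc)
  finally show ?case by simp
qed

lemma inf_free_imp_cyc_antimonotone: "cyc_antimonotone phi la ra Phi AA GG"
  using inf_free_phiB'_interleave by (intro cyc_antimonotoneI) (simp add: phiB'_def)

end

lemma inf_free_trivial_words:
  assumes inf: "inf_free la ra phi Phi (KA \<union> KF) Bf"
  shows "trivial_words KF Bf"
  unfolding trivial_words_def
proof (intro allI impI)
  fix w assume w: "centered_word KF Bf w \<and> 2 \<le> length w"
  then obtain g1 g2 r where w12: "w = g1 # g2 # r"
    by (metis Suc_le_length_iff numeral_2_eq_2)
  have cw: "centered_word (KA \<union> KF) Bf w"
    using w centered_word_mono by blast
  then have "fst (snd g1) = 0" "fst (snd g2) = 0"
    using F_letter[OF cw] centered_word_labels[of KF Bf w] w w12 by auto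
  then have "inf_value ([] @ [g1] @ [] @ [g2] @ r) = 0"
    by (rule inf_value_two_F_letters)
  then show "phi\<^sub>B' (word_prod w) = 0"
    using inf_freeD[OF inf cw] w12 by simp
qed

lemma word_prod_A_word: "centered_word KA Bf u \<Longrightarrow> \<exists>c\<in>AA. word_prod u = (c, 0)"
proof (induction u)
  case Nil
  then show ?case using AA_one by auto
next
  case (Cons p u)
  then obtain c where "c \<in> AA" "word_prod u = (c, 0)"
    by (auto simp: centered_word_Cons)
  moreover have "snd p = (fst (snd p), 0)" "fst (snd p) \<in> AA"
    using A_labels Cons.prems by (auto simp: centered_word_Cons prod_eq_iff)
  ultimately show ?case
    using AA_mult by (metis mulB_Pair word_prod_Cons la_zero ra_zero_left add_0 mult_zero_left)
qed

lemma word_prod_F_word: "centered_word KF Bf R \<Longrightarrow> R \<noteq> [] \<Longrightarrow> \<exists>g\<in>GG. word_prod R = (0, g)"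
proof (induction R)
  case (Cons p R)
  have p: "snd p = (0, snd (snd p))" "snd (snd p) \<in> GG"
    using F_labels Cons.prems by (auto simp: centered_word_Cons prod_eq_iff)
  show ?case
  proof (cases "R = []")
    case False
    then obtain g where "g \<in> GG" "word_prod R = (0, g)"
      using Cons by (auto simp: centered_word_Cons)
    then show ?thesis
      using p GG_mult by (metis mulB_Pair word_prod_Cons la_zero_left ra_zero add_0 mult_zero_left)
  qed (use p in auto)
qed simp

lemma mulB_bprod_interleave:
  "length cs = length gs \<Longrightarrow>
    mulB (a, 0) (bprod la ra (interleave (c # cs) gs)) = bprod la ra (interleave ((a * c) # cs) gs)"
  by (cases gs; cases cs) (simp_all add: la_mult flip: mulB_assoc)

lemma word_prod_interleave:
  "centered_word (KA \<union> KF) Bf ys \<Longrightarrow> \<exists>c cs gs. c \<in> AA \<and> set cs \<subseteq> AA \<and> set gs \<subseteq> GG \<and>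
     length cs = length gs \<and> word_prod ys = bprod la ra (interleave (c # cs) gs)"
proof (induction ys)
  case Nil
  then show ?case using AA_one by (intro exI[of _ 1] exI[of _ "[]"]) simp
next
  case (Cons p ys)
  then obtain c cs gs where ih: "c \<in> AA" "set cs \<subseteq> AA" "set gs \<subseteq> GG" "length cs = length gs"
    "word_prod ys = bprod la ra (interleave (c # cs) gs)"
    by (auto simp: centered_word_Cons)
  have "fst p \<in> KA \<or> fst p \<in> KF" using Cons.prems by (simp add: centered_word_Cons)
  then show ?case
  proof
    assume "fst p \<in> KA"
    then have "snd p = (fst (snd p), 0)" "fst (snd p) \<in> AA"
      using A_letter[OF Cons.prems, of p] by (simp_all add: prod_eq_iff)
    then show ?thesis
      using ih AA_mult mulB_bprod_interleave[OF ih(4), of "fst (snd p)" c]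
      by (intro exI[of _ "fst (snd p) * c"] exI[of _ cs] exI[of _ gs]) (simp add: word_prod_Cons)
  next
    assume "fst p \<in> KF"
    then have "snd p = (0, snd (snd p))" "snd (snd p) \<in> GG"
      using F_letter[OF Cons.prems, of p] by (simp_all add: prod_eq_iff)
    then show ?thesis
      using ih AA_one
      by (intro exI[of _ 1] exI[of _ "c # cs"] exI[of _ "snd (snd p) # gs"]) (simp add: word_prod_Cons)
  qed
qed

lemma phiB_word_prod_eq_0:
  assumes free: "free_words KA Bf" and ws: "centered_word (KA \<union> KF) Bf ws" "ws \<noteq> []"
  shows "phi\<^sub>B (word_prod ws) = 0"
proof (cases "\<exists>p\<in>set ws. fst p \<in> KF")
  case True
  then obtain p where "p \<in> set ws" "fst (snd p) = 0" using F_letter[OF ws(1)] by blast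
  then have "fst (word_prod ws) = 0"
    unfolding fst_word_prod by (intro prod_list_eq_0) force
  then show ?thesis by (simp add: phiB_def)
next
  case False
  then have "centered_word KA Bf ws"
    using centered_word_labels[OF ws(1)] by (intro centered_word_relabel[OF ws(1)]) auto
  then show ?thesis using free_wordsD[OF free] ws(2) by blast
qed

lemma phiB'_word_prod_A_word:
  assumes ws: "centered_word (KA \<union> KF) Bf ws" and labels: "fst ` set ws \<subseteq> KA"
  shows "phi\<^sub>B' (word_prod ws) = inf_value ws"
proof -
  obtain c where "word_prod ws = (c, 0)"
    using word_prod_A_word centered_word_relabel[OF ws labels] by blast
  moreover have "inf_value ws = 0"
    using A_letter[OF ws] labels by (intro inf_value_no_F_part) auto
  ultimately show ?thesis by (simp add: phiB'_def)
qed

lemma phiB'_word_prod_one_F_block: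
  assumes free: "free_words KA Bf" and triv: "trivial_words KF Bf"
    and cyc: "cyc_antimonotone phi la ra Phi AA GG"
    and u: "centered_word KA Bf u" and R: "centered_word KF Bf R" "R \<noteq> []"
    and v: "centered_word KA Bf v"
  shows "phi\<^sub>B' (word_prod (u @ R @ v)) = inf_value (u @ R @ v)"
proof -
  obtain cU cV gR where w: "cU \<in> AA" "word_prod u = (cU, 0)" "cV \<in> AA" "word_prod v = (cV, 0)"
    "gR \<in> GG" "word_prod R = (0, gR)"
    using word_prod_A_word[OF u] word_prod_A_word[OF v] word_prod_F_word[OF R] by blast
  have "word_prod (u @ R @ v) = bprod la ra (interleave (cU # [] @ [cV]) [gR])"
    using w by (simp add: word_prod_append)
  then have val: "phi\<^sub>B' (word_prod (u @ R @ v)) = phi (cU * cV) * Phi gR"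
    using cyc_antimonotoneD[OF cyc, of cU cV "[]" "[gR]"] w
    by (simp add: phiB'_def)
  have pairs: "phi (cU * cV) = pairings u (rev v)"
    using phiB_mulB_word_prod[OF subalgebras_A free u v] w by (simp add: phiB_def)
  obtain g R' where R': "R = g # R'" using R(2) by (cases R) auto
  show ?thesis
  proof (cases R')
    case Nil
    have "fst g \<in> KF" using centered_word_labels[OF R(1)] R' by simp
    then have "fst g \<notin> fst ` set u" "fst g \<notin> fst ` set v"
      using labels_disjoint centered_word_labels[OF u] centered_word_labels[OF v] by blast+
    then have "inf_value (u @ [(fst g, snd g)] @ v) = pairings u (rev v) * phi\<^sub>B' (snd g)"
      by (rule inf_value_middle)
    then show ?thesis using val pairs w R' Nil by (simp add: phiB'_def)
  next
    case (Cons g' R'')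
    have "fst (snd g) = 0" "fst (snd g') = 0"
      using F_letter[OF centered_word_mono[OF R(1)]] centered_word_labels[OF R(1)] R' Cons by auto
    then have "inf_value (u @ [g] @ [] @ [g'] @ R'' @ v) = 0"
      by (rule inf_value_two_F_letters)
    moreover have "Phi gR = 0"
      using triv[unfolded trivial_words_def, rule_format, of R] R R' Cons w by (simp add: phiB'_def)
    ultimately show ?thesis using val R' Cons by simp
  qed
qed

lemma phiB'_word_prod_two_F_blocks:
  assumes free: "free_words KA Bf" and cyc: "cyc_antimonotone phi la ra Phi AA GG"
    and W: "centered_word (KA \<union> KF) Bf (u @ R @ v @ y # r)"
    and u: "centered_word KA Bf u" and R: "centered_word KF Bf R" "R \<noteq> []"
    and v: "centered_word KA Bf v" "v \<noteq> []" and y: "fst y \<in> KF"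
  shows "phi\<^sub>B' (word_prod (u @ R @ v @ y # r)) = inf_value (u @ R @ v @ y # r)"
proof -
  obtain cU cV gR where w: "cU \<in> AA" "word_prod u = (cU, 0)" "cV \<in> AA" "word_prod v = (cV, 0)"
    "gR \<in> GG" "word_prod R = (0, gR)"
    using word_prod_A_word[OF u] word_prod_A_word[OF v(1)] word_prod_F_word[OF R] by blast
  have "fst (snd y) = 0" "snd (snd y) \<in> GG"
    using F_letter[OF W, of y] y by simp_all
  then have sy: "snd y = (0, snd (snd y))" by (simp add: prod_eq_iff)
  obtain d cs gs where r: "d \<in> AA" "set cs \<subseteq> AA" "set gs \<subseteq> GG" "length cs = length gs"
    "word_prod r = bprod la ra (interleave (d # cs) gs)"
  proof -
    have "centered_word (KA \<union> KF) Bf r"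
      using W by (simp add: centered_word_append centered_word_Cons)
    then show ?thesis using word_prod_interleave that by blast
  qed
  obtain ds dl where d: "d # cs = ds @ [dl]"
    by (cases "d # cs" rule: rev_exhaust) auto
  have "word_prod (u @ R @ v @ y # r) =
      bprod la ra (interleave (cU # (cV # ds) @ [dl]) (gR # snd (snd y) # gs))"
    using w sy r(5) by (simp add: word_prod_append word_prod_Cons flip: d)
  moreover have "length ds = length gs"
    using arg_cong[OF d, of length] r(4) by simp
  moreover have "set (ds @ [dl]) \<subseteq> AA"
    using r(1,2) unfolding d[symmetric] by simp
  moreover have "phi cV = 0"
    using free_wordsD[OF free v] w by (simp add: phiB_def)
  ultimately have "phi\<^sub>B' (word_prod (u @ R @ v @ y # r)) = 0"
    using cyc_antimonotoneD[OF cyc, of cU dl "cV # ds" "gR # snd (snd y) # gs"]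
      w r \<open>snd (snd y) \<in> GG\<close> d by (auto simp: phiB'_def)
  moreover have "fst (snd (hd R)) = 0"
    using F_letter[OF centered_word_mono[OF R(1)]] centered_word_labels[OF R(1)] hd_in_set[OF R(2)]
    by blast
  then have "inf_value (u @ [hd R] @ (tl R @ v) @ [y] @ r) = 0"
    using \<open>fst (snd y) = 0\<close> by (rule inf_value_two_F_letters)
  ultimately show ?thesis using hd_Cons_tl[OF R(2)] by (metis append_Cons append_Nil append_assoc)
qed

lemma cyc_antimonotone_imp_inf_free:
  assumes free: "free_words KA Bf" and triv: "trivial_words KF Bf"
    and cyc: "cyc_antimonotone phi la ra Phi AA GG"
  shows "inf_free la ra phi Phi (KA \<union> KF) Bf"
proof (rule inf_freeI, intro conjI)
  fix ws assume ws: "centered_word (KA \<union> KF) Bf ws" "ws \<noteq> []"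
  then show "phi\<^sub>B (word_prod ws) = 0" using phiB_word_prod_eq_0[OF free] by blast
  have labels: "fst ` set ws \<subseteq> KA \<union> KF" using ws centered_word_labels by blast
  have piece: "centered_word (KA \<union> KF) Bf xs" if "ws = us @ xs @ zs" for us xs zs
    using ws that by (simp add: centered_word_append)
  have A: "centered_word KA Bf xs" if "ws = us @ xs @ zs" "\<forall>p\<in>set xs. fst p \<in> KA" for us xs zs
    using centered_word_relabel[OF piece[OF that(1)]] that(2) by auto
  have F: "centered_word KF Bf xs" if "ws = us @ xs @ zs" "\<forall>p\<in>set xs. fst p \<notin> KA" for us xs zs
    using centered_word_relabel[OF piece[OF that(1)]] centered_word_labels[OF piece[OF that(1)]] that(2)
    by auto
  show "phi\<^sub>B' (word_prod ws) = inf_value ws"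
  proof (cases ws rule: split_into_blocks[where P = "\<lambda>p. fst p \<in> KA"])
    case 1
    then show ?thesis using phiB'_word_prod_A_word ws by blast
  next
    case (2 u R v)
    then show ?thesis
      using phiB'_word_prod_one_F_block[OF free triv cyc A[of "[]" u] F[of u R v] _ A[of "u @ R" v "[]"]]
      by simp
  next
    case (3 u R v y r)
    have "fst y \<in> KF" using 3 labels by auto
    then show ?thesis
      using phiB'_word_prod_two_F_blocks[OF free cyc _ A[of "[]" u] F[of u R "v @ y # r"] _
          A[of "u @ R" v "y # r"]] ws 3 by simp
  qed
qed

theorem inf_free_iff:
  "inf_free la ra phi Phi (KA \<union> KF) Bf \<longleftrightarrow>
    free_words KA Bf \<and> trivial_words KF Bf \<and> cyc_antimonotone phi la ra Phi AA GG"
proof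
  assume inf: "inf_free la ra phi Phi (KA \<union> KF) Bf"
  show "free_words KA Bf \<and> trivial_words KF Bf \<and> cyc_antimonotone phi la ra Phi AA GG"
    using inf_free_free_words[OF inf, of KA] inf_free_trivial_words[OF inf]
      inf_free_imp_cyc_antimonotone[OF inf] by simp
qed (use cyc_antimonotone_imp_inf_free in blast)

end

section \<open>The subalgebras \<open>A\<^sub>i'\<close> and \<open>F\<^sub>j'\<close>\<close>

context ncps_B'_space
begin

lemma embA_iff: "x \<in> embA S \<longleftrightarrow> fst x \<in> S \<and> snd x = 0"
  by (cases x) (auto simp: embA_def)

lemma embF_iff: "x \<in> embF sa G \<longleftrightarrow> (\<exists>c. fst x = sa c 1) \<and> snd x \<in> G"
  by (cases x) (auto simp: embF_def)

lemma subalgB_embA: "unital_subalg sa S \<Longrightarrow> subalgB (embA S)"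
  by (auto simp: subalgB_def unital_subalg_def embA_iff scaleB_def)

lemma subalgB_embF:
  assumes G: "subalg sf G"
  shows "subalgB (embF sa G)"
  unfolding subalgB_def
proof (intro conjI ballI allI)
  show "(1, 0) \<in> embF sa G"
    using G sa_one[of 1] by (auto simp: embF_iff subalg_def)
next
  fix x y assume "x \<in> embF sa G" "y \<in> embF sa G"
  then obtain c d where x: "fst x = sa c 1" "snd x \<in> G" and y: "fst y = sa d 1" "snd y \<in> G"
    by (auto simp: embF_iff)
  have "fst x + fst y = sa (c + d) 1" "fst x * fst y = sa (c * d) 1"
    using x y by (simp_all add: sa_add_scalar sa_sa) (metis mult_1 sa_mult_left sa_sa)
  moreover have "snd x + snd y \<in> G"
    "la (fst x) (snd y) + ra (snd x) (fst y) + snd x * snd y \<in> G"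
    using G x y by (simp_all add: subalg_def la_sa ra_sa la_one ra_one)
  ultimately show "x + y \<in> embF sa G" "mulB x y \<in> embF sa G"
    by (auto simp: embF_iff)
next
  fix z x assume "x \<in> embF sa G"
  then obtain c where "fst x = sa c 1" "snd x \<in> G" by (auto simp: embF_iff)
  then show "scaleB z x \<in> embF sa G"
    using G by (auto simp: embF_iff scaleB_def sa_sa subalg_def)
qed

lemma centered_embF: "b \<in> embF sa G \<Longrightarrow> phi\<^sub>B b = 0 \<Longrightarrow> fst b = 0 \<and> snd b \<in> G"
  by (auto simp: embF_iff phiB_def)

lemma zero_in_embF: "g \<in> G \<Longrightarrow> (0, g) \<in> embF sa G"
  by (simp add: embF_iff) (metis sa_zero_scalar)

lemma gen_unital_alg_in_genB:
  "c \<in> gen_unital_alg sa S \<Longrightarrow> \<forall>x\<in>S. (x, 0) \<in> genB K Bf \<Longrightarrow> (c, 0) \<in> genB K Bf"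
proof (induction rule: gen_unital_alg.induct)
  case (gua_add x y)
  then show ?case using genB_add by fastforce
next
  case (gua_mult x y)
  then show ?case using genB_mult by fastforce
next
  case (gua_scale x c)
  then show ?case using genB_scaleB[of "(x, 0)" K Bf c] by (simp add: scaleB_def)
qed (auto intro: genB_one)

lemma gen_alg_in_genB:
  "g \<in> gen_alg sf S \<Longrightarrow> \<forall>x\<in>S. (0, x) \<in> genB K Bf \<Longrightarrow> (0, g) \<in> genB K Bf"
proof (induction rule: gen_alg.induct)
  case ga_zero
  then show ?case using genB_scaleB[OF genB_one, where c = 0] by (simp add: zero_prod_def)
next
  case (ga_add x y)
  then show ?case using genB_add by fastforce
next
  case (ga_mult x y)
  then show ?case using genB_mult by fastforce
next
  case (ga_scale x c)
  then show ?case using genB_scaleB[of "(0, x)" K Bf c] by (simp add: scaleB_def)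
qed auto

lemma word_prod_F_letters:
  "ws \<noteq> [] \<Longrightarrow> \<forall>p\<in>set ws. fst (snd p) = 0 \<Longrightarrow> word_prod ws = (0, fprod (map (snd \<circ> snd) ws))"
proof (induction ws)
  case (Cons p ws)
  then obtain g where "snd p = (0, g)" by (metis prod.collapse list.set_intros(1))
  then show ?case
    using Cons by (cases ws) (simp_all add: word_prod_Cons)
qed simp

lemma centered_word_image:
  assumes "inj e" and "centered_word (e ` I) Bf w"
  shows "set (map (inv e \<circ> fst) w) \<subseteq> I" and "alternating (map (inv e \<circ> fst) w)"
    and "\<And>l. l < length w \<Longrightarrow>
      inv e (fst (w ! l)) \<in> I \<and> snd (w ! l) \<in> Bf (e (inv e (fst (w ! l)))) \<and> phi\<^sub>B (snd (w ! l)) = 0"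
proof -
  have labels: "fst p \<in> e ` I" if "p \<in> set w" for p
    using centered_word_labels[OF assms(2)] that by blast
  have inv: "e (inv e (fst p)) = fst p" if "p \<in> set w" for p
    using labels[OF that] by (blast intro: f_inv_into_f)
  show "set (map (inv e \<circ> fst) w) \<subseteq> I"
  proof
    fix i assume "i \<in> set (map (inv e \<circ> fst) w)"
    then obtain p where "p \<in> set w" "i = inv e (fst p)" by auto
    moreover obtain j where "j \<in> I" "fst p = e j" using labels[OF \<open>p \<in> set w\<close>] by blast
    ultimately show "i \<in> I" using assms(1) by simp
  qed
  then show "inv e (fst (w ! l)) \<in> I \<and> snd (w ! l) \<in> Bf (e (inv e (fst (w ! l)))) \<and>
      phi\<^sub>B (snd (w ! l)) = 0" if "l < length w" for l
    using inv[OF nth_mem[OF that]] assms(2) nth_mem[OF that] unfolding centered_word_def by auto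
  have map_labels: "map e (map (inv e \<circ> fst) w) = map fst w"
    using inv by (simp cong: map_cong)
  have "alternating (map e (map (inv e \<circ> fst) w))"
    unfolding map_labels using assms(2) by (simp add: centered_word_def)
  then show "alternating (map (inv e \<circ> fst) w)"
    using alternating_map inj_on_subset[OF assms(1)] by blast
qed

lemma free_family_imp_free_words:
  assumes inj: "inj e" and Bf: "\<forall>i\<in>I. Bf (e i) = embA (A i)" and free: "free_family phi I A"
  shows "free_words (e ` I) Bf"
  unfolding free_words_def
proof (intro allI impI)
  fix w assume w: "centered_word (e ` I) Bf w \<and> w \<noteq> []"
  let ?ks = "map (inv e \<circ> fst) w" and ?cs = "map (fst \<circ> snd) w"
  have "?cs ! l \<in> A (?ks ! l) \<and> phi (?cs ! l) = 0" if "l < length ?ks" for l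
  proof -
    have "inv e (fst (w ! l)) \<in> I" "snd (w ! l) \<in> Bf (e (inv e (fst (w ! l))))"
      "phi\<^sub>B (snd (w ! l)) = 0"
      using centered_word_image(3)[OF inj, of I Bf w l] w that by auto
    then show ?thesis
      using Bf[rule_format, OF \<open>inv e (fst (w ! l)) \<in> I\<close>] that by (simp add: embA_iff phiB_def)
  qed
  then have "phi (prod_list ?cs) = 0"
    using free[unfolded free_family_def, rule_format, of ?ks ?cs] centered_word_image(1,2)[OF inj, of I Bf w] w
    by simp
  then show "phi\<^sub>B (word_prod w) = 0" by (simp add: phiB_def fst_word_prod)
qed

lemma free_words_imp_free_family:
  assumes inj: "inj e" and Bf: "\<forall>i\<in>I. Bf (e i) = embA (A i)" and free: "free_words (e ` I) Bf"
  shows "free_family phi I A"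
  unfolding free_family_def
proof (intro allI impI)
  fix ks cs
  assume a: "ks \<noteq> [] \<and> length cs = length ks \<and> set ks \<subseteq> I \<and> alternating ks \<and>
    (\<forall>l < length ks. cs ! l \<in> A (ks ! l) \<and> phi (cs ! l) = 0)"
  define w where "w = zip (map e ks) (map (\<lambda>c. (c, 0::'f)) cs)"
  have "alternating (map e ks)"
    using a alternating_map[of e ks] inj_on_subset[OF inj subset_UNIV] by simp
  moreover have "\<forall>l < length ks. (cs ! l, 0) \<in> Bf (e (ks ! l)) \<and> phi (cs ! l) = 0"
    using a Bf nth_mem by (fastforce simp: embA_iff)
  ultimately have "centered_word (e ` I) Bf w"
    using a by (simp add: w_def centered_word_zip image_mono phiB_def)
  moreover have "w \<noteq> []" using a by (auto simp: w_def zip_eq_Nil_iff)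
  ultimately have "phi\<^sub>B (word_prod w) = 0" using free_wordsD[OF free] by blast
  moreover have ms: "map snd w = map (\<lambda>c. (c, 0)) cs" using a by (simp add: w_def)
  have "map (fst \<circ> snd) w = cs" using arg_cong[OF ms, of "map fst"] by (simp add: comp_def)
  ultimately show "phi (prod_list cs) = 0" by (simp add: phiB_def fst_word_prod)
qed

lemma free_family_iff_free_words:
  assumes "inj e" and "\<forall>i\<in>I. Bf (e i) = embA (A i)"
  shows "free_family phi I A \<longleftrightarrow> free_words (e ` I) Bf"
  using free_family_imp_free_words[OF assms] free_words_imp_free_family[OF assms] by blast

lemma trivially_independent_imp_trivial_words:
  assumes inj: "inj e" and Bf: "\<forall>j\<in>J. Bf (e j) = embF sa (F j)"
    and triv: "trivially_independent Phi J F"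
  shows "trivial_words (e ` J) Bf"
  unfolding trivial_words_def
proof (intro allI impI)
  fix w assume w: "centered_word (e ` J) Bf w \<and> 2 \<le> length w"
  let ?js = "map (inv e \<circ> fst) w" and ?gs = "map (snd \<circ> snd) w"
  have letters: "fst (snd (w ! l)) = 0 \<and> ?gs ! l \<in> F (?js ! l)" if "l < length w" for l
  proof -
    have "inv e (fst (w ! l)) \<in> J" "snd (w ! l) \<in> Bf (e (inv e (fst (w ! l))))"
      "phi\<^sub>B (snd (w ! l)) = 0"
      using centered_word_image(3)[OF inj, of J Bf w l] w that by auto
    then show ?thesis
      using Bf[rule_format, OF \<open>inv e (fst (w ! l)) \<in> J\<close>] centered_embF that by simp
  qed
  then have "Phi (fprod ?gs) = 0"
    using triv[unfolded trivially_independent_def, rule_format, of ?js ?gs]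
      centered_word_image(1,2)[OF inj, of J Bf w] w by simp
  moreover have "\<forall>p\<in>set w. fst (snd p) = 0"
    using letters by (metis in_set_conv_nth)
  then have "word_prod w = (0, fprod ?gs)"
    using w by (intro word_prod_F_letters) auto
  ultimately show "phi\<^sub>B' (word_prod w) = 0" by (simp add: phiB'_def)
qed

lemma trivial_words_imp_trivially_independent:
  assumes inj: "inj e" and Bf: "\<forall>j\<in>J. Bf (e j) = embF sa (F j)"
    and triv: "trivial_words (e ` J) Bf"
  shows "trivially_independent Phi J F"
  unfolding trivially_independent_def
proof (intro allI impI)
  fix js gs
  assume a: "2 \<le> length js \<and> length gs = length js \<and> set js \<subseteq> J \<and> alternating js \<and>
    (\<forall>l < length js. gs ! l \<in> F (js ! l))"
  define w where "w = zip (map e js) (map (\<lambda>g. (0::'a, g)) gs)"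
  have "alternating (map e js)"
    using a alternating_map[of e js] inj_on_subset[OF inj subset_UNIV] by simp
  moreover have "\<forall>l < length js. (0, gs ! l) \<in> Bf (e (js ! l))"
    using a Bf nth_mem by (fastforce intro: zero_in_embF)
  ultimately have "centered_word (e ` J) Bf w"
    using a by (simp add: w_def centered_word_zip image_mono phiB_def)
  moreover have len: "2 \<le> length w" using a by (simp add: w_def)
  ultimately have "phi\<^sub>B' (word_prod w) = 0" using triv by (simp add: trivial_words_def)
  have ms: "map snd w = map (Pair 0) gs" using a by (simp add: w_def)
  have "\<forall>p\<in>set w. fst (snd p) = 0"
  proof
    fix p assume "p \<in> set w"
    then have "snd p \<in> set (map (Pair 0) gs)" unfolding ms[symmetric] by simp
    then show "fst (snd p) = 0" by auto
  qed
  moreover have "map (snd \<circ> snd) w = gs"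
    using arg_cong[OF ms, of "map snd"] by (simp add: comp_def)
  moreover have "w \<noteq> []" using len by auto
  ultimately have "word_prod w = (0, fprod gs)"
    using word_prod_F_letters[of w] by simp
  with \<open>phi\<^sub>B' (word_prod w) = 0\<close> show "Phi (fprod gs) = 0" by (simp add: phiB'_def)
qed

lemma trivially_independent_iff_trivial_words:
  assumes "inj e" and "\<forall>j\<in>J. Bf (e j) = embF sa (F j)"
  shows "trivially_independent Phi J F \<longleftrightarrow> trivial_words (e ` J) Bf"
  using trivially_independent_imp_trivial_words[OF assms] trivial_words_imp_trivially_independent[OF assms]
  by blast

lemma trivial_words_singleton: "trivial_words {k} Bf"
proof -
  have "length w < 2" if "centered_word {k} Bf w" for w
  proof (rule ccontr)
    assume "\<not> length w < 2"
    then obtain p q r where "w = p # q # r" by (metis Suc_le_length_iff not_less numeral_2_eq_2)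
    then show False using that by (auto simp: centered_word_Cons)
  qed
  then show ?thesis unfolding trivial_words_def by (meson not_le)
qed

lemma subalg_gen_alg: "subalg sf (gen_alg sf S)"
  unfolding subalg_def by (auto intro: gen_alg.intros)

lemma B'_family_sum:
  assumes "\<forall>i\<in>I. unital_subalg sa (A i)" and "\<forall>j\<in>J. subalg sf (F j)"
  shows "B'_family sa phi sf la ra Phi (Inl ` I) (Inr ` J)
    (\<lambda>k. case k of Inl i \<Rightarrow> embA (A i) | Inr j \<Rightarrow> embF sa (F j))
    (gen_unital_alg sa (\<Union>i\<in>I. A i)) (gen_alg sf (\<Union>j\<in>J. F j))"
proof unfold_locales
  let ?Bf = "\<lambda>k. case k of Inl i \<Rightarrow> embA (A i) | Inr j \<Rightarrow> embF sa (F j)"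
  have "(x, 0) \<in> genB (Inl ` I) ?Bf" if "i \<in> I" "x \<in> A i" for i x
    using that by (intro genB_base[of "Inl i"]) (auto simp: embA_iff)
  then show "\<forall>c\<in>gen_unital_alg sa (\<Union>i\<in>I. A i). (c, 0) \<in> genB (Inl ` I) ?Bf"
    by (blast intro: gen_unital_alg_in_genB)
  have "(0, g) \<in> genB (Inr ` J) ?Bf" if "j \<in> J" "g \<in> F j" for j g
    using that by (intro genB_base[of "Inr j"]) (auto intro: zero_in_embF)
  then show "\<forall>g\<in>gen_alg sf (\<Union>j\<in>J. F j). (0, g) \<in> genB (Inr ` J) ?Bf"
    by (blast intro: gen_alg_in_genB)
qed (use assms in \<open>auto simp: embA_iff subalgB_embA subalgB_embF
  intro: gua_base[OF UN_I] ga_base[OF UN_I] gua_one gua_mult ga_mult dest: centered_embF\<close>)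

lemma B'_family_option:
  assumes "\<forall>i\<in>I. unital_subalg sa (A i)"
  shows "B'_family sa phi sf la ra Phi (Some ` I) {None}
    (\<lambda>k. case k of Some i \<Rightarrow> embA (A i) | None \<Rightarrow> embF sa (gen_alg sf (\<Union>j\<in>J. F j)))
    (gen_unital_alg sa (\<Union>i\<in>I. A i)) (gen_alg sf (\<Union>j\<in>J. F j))"
proof unfold_locales
  let ?Bf = "\<lambda>k. case k of Some i \<Rightarrow> embA (A i) | None \<Rightarrow> embF sa (gen_alg sf (\<Union>j\<in>J. F j))"
  have "(x, 0) \<in> genB (Some ` I) ?Bf" if "i \<in> I" "x \<in> A i" for i x
    using that by (intro genB_base[of "Some i"]) (auto simp: embA_iff)
  then show "\<forall>c\<in>gen_unital_alg sa (\<Union>i\<in>I. A i). (c, 0) \<in> genB (Some ` I) ?Bf"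
    by (blast intro: gen_unital_alg_in_genB)
  show "\<forall>g\<in>gen_alg sf (\<Union>j\<in>J. F j). (0, g) \<in> genB {None} ?Bf"
    by (auto intro!: genB_base[of None] zero_in_embF)
qed (use assms in \<open>auto simp: embA_iff subalgB_embA subalgB_embF subalg_gen_alg
  intro: gua_base[OF UN_I] gua_one gua_mult ga_mult dest: centered_embF\<close>)

lemma B'_free_iff_inf_free:
  assumes "\<forall>i\<in>I. unital_subalg sa (A i)" and "\<forall>j\<in>J. subalg sf (F j)"
  shows "B'_free sa phi sf la ra Phi I A J F \<longleftrightarrow>
    inf_free la ra phi Phi (I <+> J) (\<lambda>k. case k of Inl i \<Rightarrow> embA (A i) | Inr j \<Rightarrow> embF sa (F j))"
proof -
  define Bf where "Bf = (\<lambda>k. case k of Inl i \<Rightarrow> embA (A i) | Inr j \<Rightarrow> embF sa (F j))"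
  interpret B'_family sa phi sf la ra Phi "Inl ` I" "Inr ` J" Bf
    "gen_unital_alg sa (\<Union>i\<in>I. A i)" "gen_alg sf (\<Union>j\<in>J. F j)"
    unfolding Bf_def by (rule B'_family_sum[OF assms])
  have "free_family phi I A \<longleftrightarrow> free_words (Inl ` I) Bf"
    by (rule free_family_iff_free_words) (simp_all add: Bf_def)
  moreover have "trivially_independent Phi J F \<longleftrightarrow> trivial_words (Inr ` J) Bf"
    by (rule trivially_independent_iff_trivial_words) (simp_all add: Bf_def)
  ultimately show ?thesis
    unfolding B'_free_def weakly_B'_free_def Plus_def Bf_def[symmetric] inf_free_iff by blast
qed

lemma weakly_B'_free_iff_inf_free:
  assumes "\<forall>i\<in>I. unital_subalg sa (A i)"
  shows "weakly_B'_free sa phi sf la ra Phi I A J F \<longleftrightarrow>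
    inf_free la ra phi Phi (Some ` I \<union> {None})
      (\<lambda>k. case k of Some i \<Rightarrow> embA (A i) | None \<Rightarrow> embF sa (gen_alg sf (\<Union>j\<in>J. F j)))"
proof -
  define Bf where
    "Bf = (\<lambda>k. case k of Some i \<Rightarrow> embA (A i) | None \<Rightarrow> embF sa (gen_alg sf (\<Union>j\<in>J. F j)))"
  interpret B'_family sa phi sf la ra Phi "Some ` I" "{None}" Bf
    "gen_unital_alg sa (\<Union>i\<in>I. A i)" "gen_alg sf (\<Union>j\<in>J. F j)"
    unfolding Bf_def by (rule B'_family_option[OF assms])
  have "free_family phi I A \<longleftrightarrow> free_words (Some ` I) Bf"
    by (rule free_family_iff_free_words) (simp_all add: Bf_def)
  then show ?thesis
    unfolding weakly_B'_free_def Bf_def[symmetric] inf_free_iff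
    using trivial_words_singleton[of None Bf] by blast
qed

end

theorem theorem3p5:
  fixes sa :: "complex \<Rightarrow> 'a::ring_1 \<Rightarrow> 'a" and phi :: "'a \<Rightarrow> complex"
    and sf :: "complex \<Rightarrow> 'f::ring \<Rightarrow> 'f"
    and la :: "'a \<Rightarrow> 'f \<Rightarrow> 'f" and ra :: "'f \<Rightarrow> 'a \<Rightarrow> 'f" and Phi :: "'f \<Rightarrow> complex"
    and I :: "'i set" and A :: "'i \<Rightarrow> 'a set" and J :: "'j set" and F :: "'j \<Rightarrow> 'f set"
  assumes "ncps_B' sa phi sf la ra Phi"
    and "\<forall>i\<in>I. unital_subalg sa (A i)"
    and "\<forall>j\<in>J. subalg sf (F j)"
  shows "(B'_free sa phi sf la ra Phi I A J F \<longleftrightarrow>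
            inf_free la ra phi Phi (I <+> J)
              (\<lambda>k. case k of Inl i \<Rightarrow> embA (A i) | Inr j \<Rightarrow> embF sa (F j)))
       \<and> (weakly_B'_free sa phi sf la ra Phi I A J F \<longleftrightarrow>
            inf_free la ra phi Phi (Some ` I \<union> {None})
              (\<lambda>k. case k of Some i \<Rightarrow> embA (A i)
                           | None \<Rightarrow> embF sa (gen_alg sf (\<Union>j\<in>J. F j))))"
proof -
  interpret ncps_B'_space sa phi sf la ra Phi by (rule ncps_B'_space.intro) (rule assms(1))
  show ?thesis
    using B'_free_iff_inf_free[OF assms(2,3)] weakly_B'_free_iff_inf_free[OF assms(2)] by blast
qed

end
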